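(* Let $m\in\mathbb{N}$, $p\in[1,\infty)$, $\mathcal{Y}=\mathbb{R}^m$ with the metric induced by a norm $\|\cdot\|$, let $\mu\in\mathcal{P}_p(\mathbb{R}^m)$ with $i$-th marginal $\mu_i\in\mathcal{P}_p(\mathbb{R})$, $i=1,\ldots,m$. Let $\beta>0$; for $i=1,\ldots,m$ let $n_i\in\mathbb{N}$, $\underline{\kappa}_i\in\mathbb{R}$ and $\kappa_{i,j}:=\underline{\kappa}_i+j\beta$, $j=0,\ldots,n_i$. Let $$\mathcal{G}_0:=\Big\{(x_1,\ldots,x_m)^\top\mapsto\Big(\max_{i\in L}\{(x_i-\kappa_{i,j_i})^+\}\Big)^+:\ L\subseteq\{1,\ldots,m\},\ 0\le j_i\le n_i\ \forall i\in L\Big\},$$ and let $\mathcal{G}:=\mathcal{G}_0\cup\{\boldsymbol{x}\mapsto x_i:1\le i\le m\}$ if $p=1$, and $\mathcal{G}:=\mathcal{G}_0\cup\{\boldsymbol{x}\mapsto((\kappa_{i,0}-x_i)^+)^p:1\le i\le m\}\cup\{\boldsymbol{x}\mapsto((x_i-\kappa_{i,n_i})^+)^p:1\le i\le m\}$ if $p>1$. Let $C_{\|\cdot\|}\ge1$ be a constant with $\|\boldsymbol{x}\|\le C_{\|\cdot\|}\|\boldsymbol{x}\|_p$ for all $\boldsymbol{x}\in\mathbb{R}^m$. Then $$\overline{W}_{p,\mu}([\mu]_{\mathcal{G}})\le2C_{\|\cdot\|}m^{1/p}\beta+2C_{\|\cdot\|}\Big(\sum_{i=1}^m\int_{\mathbb{R}}\big((\kappa_{i,0}-x_i)^+\big)^p+\big((x_i-\kappa_{i,n_i})^+\big)^p\,\mu_i(\mathrm{d}x_i)\Big)^{1/p}.$$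 In particular, for any $\epsilon>0$ there exist $\beta>0$, $(n_i)_{i=1}^m\subset\mathbb{N}$ and $(\underline{\kappa}_i)_{i=1}^m\subset\mathbb{R}$ such that $\overline{W}_{p,\mu}([\mu]_{\mathcal{G}})\le\epsilon$.
   Context: Convention: for $L=\emptyset$ the maximum over the empty index set is $-\infty$, so the corresponding function in $\mathcal{G}_0$ is identically $0$. $\mathcal{P}_p(\mathcal{Y})$ is the set of Borel probability measures with finite $p$-th moment and $W_p$ the Wasserstein distance of order $p$ w.r.t. $\|\cdot\|$. $\mathcal{P}_p(\mathcal{Y};\mathcal{G}):=\{\nu\in\mathcal{P}_p(\mathcal{Y}):\mathcal{G}\subseteq\mathcal{L}^p(\mathcal{Y},\nu)\}$; for $\mu\in\mathcal{P}_p(\mathcal{Y};\mathcal{G})$, $[\mu]_{\mathcal{G}}:=\{\nu\in\mathcal{P}_p(\mathcal{Y};\mathcal{G}):\int g\,\mathrm{d}\nu=\int g\,\mathrm{d}\mu\ \forall g\in\mathcal{G}\}$ and $\overline{W}_{p,\mu}([\mu]_{\mathcal{G}}):=\sup_{\nu\in[\mu]_{\mathcal{G}}}W_p(\mu,\nu)$. *)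

theory Defs
  imports "HOL-Probability.Probability"
begin

definition is_norm :: "('a::real_vector \<Rightarrow> real) \<Rightarrow> bool" where
  "is_norm N \<longleftrightarrow> (\<forall>x. 0 \<le> N x) \<and> (\<forall>x. N x = 0 \<longleftrightarrow> x = 0)
     \<and> (\<forall>c x. N (scaleR c x) = \<bar>c\<bar> * N x) \<and> (\<forall>x y. N (x + y) \<le> N x + N y)"

definition Pp :: "('a::euclidean_space \<Rightarrow> real) \<Rightarrow> real \<Rightarrow> 'a measure set" where
  "Pp N p = {\<nu>. prob_space \<nu> \<and> sets \<nu> = sets borel \<and> integrable \<nu> (\<lambda>x. N x powr p)}"

definition couplings :: "'a::euclidean_space measure \<Rightarrow> 'a measure \<Rightarrow> ('a \<times> 'a) measure set" where
  "couplings \<mu> \<nu> = {\<pi>. prob_space \<pi> \<and> sets \<pi> = sets (borel \<Otimes>\<^sub>M borel)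
      \<and> distr \<pi> borel fst = \<mu> \<and> distr \<pi> borel snd = \<nu>}"

definition Wp :: "('a::euclidean_space \<Rightarrow> real) \<Rightarrow> real \<Rightarrow> 'a measure \<Rightarrow> 'a measure \<Rightarrow> real" where
  "Wp N p \<mu> \<nu> = enn2real (INF \<pi>\<in>couplings \<mu> \<nu>.
       \<integral>\<^sup>+ z. ennreal (N (fst z - snd z) powr p) \<partial>\<pi>) powr (1 / p)"

definition PpG :: "('a::euclidean_space \<Rightarrow> real) \<Rightarrow> real \<Rightarrow> ('a \<Rightarrow> real) set \<Rightarrow> 'a measure set" where
  "PpG N p G = {\<nu> \<in> Pp N p. \<forall>g\<in>G. g \<in> borel_measurable borel \<and> integrable \<nu> (\<lambda>x. \<bar>g x\<bar> powr p)}"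

definition eq_class :: "('a::euclidean_space \<Rightarrow> real) \<Rightarrow> real \<Rightarrow> ('a \<Rightarrow> real) set \<Rightarrow> 'a measure \<Rightarrow> 'a measure set" where
  "eq_class N p G \<mu> = {\<nu> \<in> PpG N p G. \<forall>g\<in>G. (\<integral>x. g x \<partial>\<nu>) = (\<integral>x. g x \<partial>\<mu>)}"

definition Wbar :: "('a::euclidean_space \<Rightarrow> real) \<Rightarrow> real \<Rightarrow> ('a \<Rightarrow> real) set \<Rightarrow> 'a measure \<Rightarrow> ennreal" where
  "Wbar N p G \<mu> = (SUP \<nu>\<in>eq_class N p G \<mu>. ennreal (Wp N p \<mu> \<nu>))"

definition kappa :: "('m \<Rightarrow> real) \<Rightarrow> real \<Rightarrow> 'm \<Rightarrow> nat \<Rightarrow> real" where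
  "kappa kl \<beta> i j = kl i + real j * \<beta>"

definition G0 :: "('m::finite \<Rightarrow> real) \<Rightarrow> real \<Rightarrow> ('m \<Rightarrow> nat) \<Rightarrow> (real^'m \<Rightarrow> real) set" where
  "G0 kl \<beta> n = {(\<lambda>x. if L = {} then 0
        else max 0 (MAX i\<in>L. max 0 (x $ i - kappa kl \<beta> i (j i))))
      | L j. \<forall>i\<in>L. j i \<le> n i}"

definition Gfam :: "real \<Rightarrow> ('m::finite \<Rightarrow> real) \<Rightarrow> real \<Rightarrow> ('m \<Rightarrow> nat) \<Rightarrow> (real^'m \<Rightarrow> real) set" where
  "Gfam p kl \<beta> n =
     (if p = 1 then G0 kl \<beta> n \<union> {(\<lambda>x. x $ i) | i. True}
      else G0 kl \<beta> n
        \<union> {(\<lambda>x. (max 0 (kappa kl \<beta> i 0 - x $ i)) powr p) | i. True}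
        \<union> {(\<lambda>x. (max 0 (x $ i - kappa kl \<beta> i (n i))) powr p) | i. True})"

end

(* Round every coordinate x_i at random to one of the knots kappa_{i,0}, ..., kappa_{i,n_i}: a point
   between two adjacent knots goes to either of them with probabilities linear in its position, a
   point outside [kappa_{i,0}, kappa_{i,n_i}] goes to the nearest end knot. Driving all coordinates by
   one uniform variable, the probability w_r(x) that x is rounded to the grid point r has partial sums
   sum_{r <= k} w_r(x) = 1 - (g_{L,k}(x) - g_{L,k+1}(x)) / beta with both g in G_0. By Moebius
   inversion every nu in [mu]_G therefore gives each grid point the same mass Q_r as mu, and
   pi(dx, dy) = sum_r w_r(x) w_r(y) / Q_r mu(dx) nu(dy) couples mu and nu. Under pi the points x and
   y are rounded to a common grid point, so |x_i - y_i| <= 2 beta + d_i(x_i) + d_i(y_i), where d_i is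
   the distance to [kappa_{i,0}, kappa_{i,n_i}]. Minkowski's inequality then gives the bound, because
   the p-th moments of d_i are fixed by G as well; they vanish as the grid exhausts the line. *)

theory Submission
  imports Defs
begin

abbreviation lp_norm :: "real \<Rightarrow> real^'m \<Rightarrow> real" where
  "lp_norm p x \<equiv> (\<Sum>i\<in>UNIV. \<bar>x $ i\<bar> powr p) powr (1 / p)"

section \<open>Minkowski's inequality\<close>

lemma powr_add_le_weighted:
  fixes a b l p :: real
  assumes "0 \<le> a" "0 \<le> b" "0 < l" "l < 1" "1 \<le> p"
  shows "(a + b) powr p \<le> l powr (1 - p) * a powr p + (1 - l) powr (1 - p) * b powr p"
proof (cases "a = 0 \<or> b = 0")
  case True
  have "1 \<le> l powr (1 - p)" "1 \<le> (1 - l) powr (1 - p)"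
    using assms by (smt (verit) powr01_less_one)+
  then show ?thesis using True
    by (smt (verit, ccfv_SIG) mult_le_cancel_right1 powr_0 powr_ge_zero)
next
  case False
  then have ab: "0 < a" "0 < b" using assms by auto
  have "(l * (a / l) + (1 - l) * (b / (1 - l))) powr p
      \<le> l * (a / l) powr p + (1 - l) * (b / (1 - l)) powr p"
    using convex_onD[OF powr_convex[OF assms(5)], of "1 - l" "a / l" "b / (1 - l)"] ab assms by auto
  moreover have "l * (a / l) powr p = l powr (1 - p) * a powr p"
    using assms ab by (simp add: powr_divide powr_diff divide_simps)
  moreover have "(1 - l) * (b / (1 - l)) powr p = (1 - l) powr (1 - p) * b powr p"
    using assms ab by (simp add: powr_divide powr_diff divide_simps)
  ultimately show ?thesis using assms by simp
qed

lemma powr_add_eq_weighted: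
  fixes s t p :: real
  assumes "0 < s" "0 < t"
  shows "(s / (s + t)) powr (1 - p) * s powr p + (1 - s / (s + t)) powr (1 - p) * t powr p
    = (s + t) powr p"
proof -
  have "1 - s / (s + t) = t / (s + t)" using assms by (simp add: field_simps)
  moreover have "(s / (s + t)) powr (1 - p) * s powr p = s * (s + t) powr (p - 1)"
    using assms by (simp add: powr_divide powr_diff powr_add divide_simps powr_minus)
  moreover have "(t / (s + t)) powr (1 - p) * t powr p = t * (s + t) powr (p - 1)"
    using assms by (simp add: powr_divide powr_diff powr_add divide_simps powr_minus)
  moreover have "s * (s + t) powr (p - 1) + t * (s + t) powr (p - 1) = (s + t) * (s + t) powr (p - 1)"
    by (simp add: distrib_right)
  moreover have "\<dots> = (s + t) powr p" using assms by (simp add: powr_diff)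
  ultimately show ?thesis by simp
qed

text \<open>powr_add_le_weighted is sharp for l = s / (s + t) with s = a powr (1/p), t = b powr (1/p);
  hence bounds on X for all weights l give the triangle inequality for p-th roots.\<close>
lemma powr_inverse_le_add_of_weighted_bounds:
  fixes X A B p :: real
  assumes "0 \<le> X" "0 \<le> A" "0 \<le> B" "1 \<le> p"
    and weighted: "\<And>l. 0 < l \<Longrightarrow> l < 1 \<Longrightarrow> X \<le> l powr (1 - p) * A + (1 - l) powr (1 - p) * B"
  shows "X powr (1 / p) \<le> A powr (1 / p) + B powr (1 / p)"
proof -
  have p0: "0 < p" using assms by auto
  have perturbed: "X powr (1 / p) \<le> (A + e) powr (1 / p) + (B + e) powr (1 / p)" if "0 < e" for e
  proof -
    define s where "s = (A + e) powr (1 / p)"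
    define t where "t = (B + e) powr (1 / p)"
    have st: "0 < s" "0 < t" using that assms by (auto simp: s_def t_def)
    have sp: "s powr p = A + e" "t powr p = B + e"
      using that assms p0 by (auto simp: s_def t_def powr_powr)
    define l where "l = s / (s + t)"
    have "X \<le> l powr (1 - p) * A + (1 - l) powr (1 - p) * B"
      using weighted st by (simp add: l_def)
    also have "\<dots> \<le> l powr (1 - p) * (A + e) + (1 - l) powr (1 - p) * (B + e)"
      using that by (intro add_mono mult_left_mono) auto
    also have "\<dots> = (s + t) powr p" using powr_add_eq_weighted[OF st, of p] sp by (simp add: l_def)
    finally have "X powr (1 / p) \<le> ((s + t) powr p) powr (1 / p)"
      using assms p0 by (intro powr_mono2) auto
    also have "\<dots> = s + t" using st p0 by (simp add: powr_powr)
    finally show ?thesis by (simp add: s_def t_def)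
  qed
  have "((\<lambda>e. (A + e) powr (1 / p) + (B + e) powr (1 / p))
      \<longlongrightarrow> (A + 0) powr (1 / p) + (B + 0) powr (1 / p)) (at_right 0)"
    using p0 assms by (intro tendsto_intros) (auto intro!: eventually_mono[OF eventually_at_right_less])
  from tendsto_lowerbound[OF this] show ?thesis
    using perturbed by (simp add: eventually_at_right_less eventually_at_filter)
qed

lemma integrable_powr_add:
  fixes f g :: "'a \<Rightarrow> real"
  assumes p: "1 \<le> p" and f0: "\<And>x. 0 \<le> f x" and g0: "\<And>x. 0 \<le> g x"
    and fm: "f \<in> borel_measurable M" and gm: "g \<in> borel_measurable M"
    and fi: "integrable M (\<lambda>x. f x powr p)" and gi: "integrable M (\<lambda>x. g x powr p)"
  shows "integrable M (\<lambda>x. (f x + g x) powr p)"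
proof (rule Bochner_Integration.integrable_bound)
  show "integrable M (\<lambda>x. (1/2) powr (1 - p) * f x powr p + (1/2) powr (1 - p) * g x powr p)"
    using fi gi by auto
  show "(\<lambda>x. (f x + g x) powr p) \<in> borel_measurable M" using fm gm by measurable
  show "AE x in M. norm ((f x + g x) powr p)
      \<le> norm ((1/2) powr (1 - p) * f x powr p + (1/2) powr (1 - p) * g x powr p)"
    using powr_add_le_weighted[of "f x" "g x" "1/2" p for x] f0 g0 p by (auto intro!: AE_I2)
qed

lemma minkowski_sum_integral:
  fixes f g :: "'i::finite \<Rightarrow> 'a \<Rightarrow> real"
  assumes p: "1 \<le> p" and f0: "\<And>i x. 0 \<le> f i x" and g0: "\<And>i x. 0 \<le> g i x"
    and fm: "\<And>i. f i \<in> borel_measurable M" and gm: "\<And>i. g i \<in> borel_measurable M"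
    and fi: "\<And>i. integrable M (\<lambda>x. f i x powr p)" and gi: "\<And>i. integrable M (\<lambda>x. g i x powr p)"
  shows "(\<Sum>i\<in>UNIV. \<integral>x. (f i x + g i x) powr p \<partial>M) powr (1 / p)
     \<le> (\<Sum>i\<in>UNIV. \<integral>x. f i x powr p \<partial>M) powr (1 / p) + (\<Sum>i\<in>UNIV. \<integral>x. g i x powr p \<partial>M) powr (1 / p)"
proof (rule powr_inverse_le_add_of_weighted_bounds)
  have fgi: "integrable M (\<lambda>x. (f i x + g i x) powr p)" for i
    by (rule integrable_powr_add) (use assms in auto)
  show "0 \<le> (\<Sum>i\<in>UNIV. \<integral>x. (f i x + g i x) powr p \<partial>M)" "0 \<le> (\<Sum>i\<in>UNIV. \<integral>x. f i x powr p \<partial>M)"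
    "0 \<le> (\<Sum>i\<in>UNIV. \<integral>x. g i x powr p \<partial>M)"
    by (auto intro!: sum_nonneg integral_nonneg_AE)
  fix l :: real assume l: "0 < l" "l < 1"
  have "(\<Sum>i\<in>UNIV. \<integral>x. (f i x + g i x) powr p \<partial>M)
      \<le> (\<Sum>i\<in>UNIV. \<integral>x. l powr (1 - p) * f i x powr p + (1 - l) powr (1 - p) * g i x powr p \<partial>M)"
    using powr_add_le_weighted fgi fi gi assms l by (intro sum_mono integral_mono) auto
  also have "\<dots> = l powr (1 - p) * (\<Sum>i\<in>UNIV. \<integral>x. f i x powr p \<partial>M)
      + (1 - l) powr (1 - p) * (\<Sum>i\<in>UNIV. \<integral>x. g i x powr p \<partial>M)"
    using fi gi by (simp add: sum_distrib_left sum.distrib)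
  finally show "(\<Sum>i\<in>UNIV. \<integral>x. (f i x + g i x) powr p \<partial>M)
      \<le> l powr (1 - p) * (\<Sum>i\<in>UNIV. \<integral>x. f i x powr p \<partial>M)
        + (1 - l) powr (1 - p) * (\<Sum>i\<in>UNIV. \<integral>x. g i x powr p \<partial>M)" .
qed (rule p)

lemma (in prob_space) minkowski_sum_integral_const_add:
  fixes f g :: "'i::finite \<Rightarrow> 'a \<Rightarrow> real"
  assumes p: "1 \<le> p" and a: "0 \<le> a" and f0: "\<And>i x. 0 \<le> f i x" and g0: "\<And>i x. 0 \<le> g i x"
    and fm: "\<And>i. f i \<in> borel_measurable M" and gm: "\<And>i. g i \<in> borel_measurable M"
    and fi: "\<And>i. integrable M (\<lambda>x. f i x powr p)" and gi: "\<And>i. integrable M (\<lambda>x. g i x powr p)"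
  shows "(\<Sum>i\<in>UNIV. \<integral>x. (a + f i x + g i x) powr p \<partial>M) powr (1 / p)
     \<le> a * real CARD('i) powr (1 / p) + (\<Sum>i\<in>UNIV. \<integral>x. f i x powr p \<partial>M) powr (1 / p)
       + (\<Sum>i\<in>UNIV. \<integral>x. g i x powr p \<partial>M) powr (1 / p)"
proof -
  have "(\<Sum>i\<in>UNIV. \<integral>x. (a + (f i x + g i x)) powr p \<partial>M) powr (1 / p)
      \<le> (\<Sum>i\<in>(UNIV::'i set). \<integral>x. a powr p \<partial>M) powr (1 / p)
        + (\<Sum>i\<in>UNIV. \<integral>x. (f i x + g i x) powr p \<partial>M) powr (1 / p)"
  proof (rule minkowski_sum_integral[OF p])
    show "integrable M (\<lambda>x. (f i x + g i x) powr p)" for i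
      by (rule integrable_powr_add[OF p]) (use assms in auto)
  qed (use assms in auto)
  also have "(\<Sum>i\<in>(UNIV::'i set). \<integral>x. a powr p \<partial>M) powr (1 / p) = a * real CARD('i) powr (1 / p)"
    using a p by (simp add: prob_space powr_mult powr_powr)
  moreover have "(\<Sum>i\<in>UNIV. \<integral>x. (f i x + g i x) powr p \<partial>M) powr (1 / p)
      \<le> (\<Sum>i\<in>UNIV. \<integral>x. f i x powr p \<partial>M) powr (1 / p) + (\<Sum>i\<in>UNIV. \<integral>x. g i x powr p \<partial>M) powr (1 / p)"
    by (rule minkowski_sum_integral[OF p f0 g0 fm gm fi gi])
  ultimately show ?thesis by (simp add: add.assoc)
qed

lemma integrable_of_integrable_abs_powr:
  fixes g :: "'a \<Rightarrow> real"
  assumes "finite_measure M" "1 \<le> p" "g \<in> borel_measurable M"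
    and "integrable M (\<lambda>x. \<bar>g x\<bar> powr p)"
  shows "integrable M g"
proof (rule Bochner_Integration.integrable_bound)
  interpret finite_measure M by fact
  show "integrable M (\<lambda>x. 1 + \<bar>g x\<bar> powr p)" using assms(4) by auto
  have "\<bar>t\<bar> \<le> 1 + \<bar>t\<bar> powr p" for t :: real
  proof (cases "\<bar>t\<bar> \<le> 1")
    case False
    then have "\<bar>t\<bar> powr 1 \<le> \<bar>t\<bar> powr p" using assms(2) by (intro powr_mono) auto
    then show ?thesis using False by simp
  qed (smt (verit) powr_ge_zero)
  then show "AE x in M. norm (g x) \<le> norm (1 + \<bar>g x\<bar> powr p)"
    by (auto intro!: AE_I2 simp: add_nonneg_nonneg)
qed (rule assms(3))

lemma is_normD:
  assumes "is_norm N"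
  shows "0 \<le> N x" "N x = 0 \<longleftrightarrow> x = 0" "N (c *\<^sub>R x) = \<bar>c\<bar> * N x" "N (x + y) \<le> N x + N y"
  using assms unfolding is_norm_def by auto

lemma is_norm_minus: "is_norm N \<Longrightarrow> N (- x) = N x"
  using is_normD(3)[of N "-1" x] by simp

lemma is_norm_reverse_triangle:
  assumes "is_norm N" shows "\<bar>N x - N y\<bar> \<le> N (x - y)"
  using is_normD(4)[OF assms, of "x - y" y] is_normD(4)[OF assms, of "y - x" x]
    is_norm_minus[OF assms, of "x - y"] by simp

lemma lp_norm_le_norm:
  fixes x :: "real^'m"
  assumes "0 < p"
  shows "lp_norm p x \<le> real CARD('m) powr (1 / p) * norm x"
proof -
  have "(\<Sum>i\<in>UNIV. \<bar>x $ i\<bar> powr p) \<le> (\<Sum>i\<in>(UNIV::'m set). norm x powr p)"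
    using assms by (intro sum_mono powr_mono2) (auto simp: component_le_norm_cart)
  then have "lp_norm p x \<le> (real CARD('m) * norm x powr p) powr (1 / p)"
    using assms by (intro powr_mono2) (auto intro: sum_nonneg)
  also have "\<dots> = real CARD('m) powr (1 / p) * norm x"
    using assms by (simp add: powr_mult powr_powr)
  finally show ?thesis .
qed

lemma is_norm_continuous:
  fixes N :: "'a::real_normed_vector \<Rightarrow> real"
  assumes "is_norm N" and "0 \<le> K" and bound: "\<And>x. N x \<le> K * norm x"
  shows "continuous_on UNIV N"
proof -
  have "K-lipschitz_on UNIV N"
  proof (rule lipschitz_onI)
    fix x y :: 'a
    have "dist (N x) (N y) \<le> N (x - y)"
      using is_norm_reverse_triangle[OF assms(1)] by (simp add: dist_real_def)
    also have "\<dots> \<le> K * dist x y" using bound by (simp add: dist_norm)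
    finally show "dist (N x) (N y) \<le> K * dist x y" .
  qed fact
  then show ?thesis using lipschitz_on_continuous_on by blast
qed

lemma is_norm_continuous_of_lp_bound:
  fixes N :: "real^'m \<Rightarrow> real"
  assumes "is_norm N" "0 < p" "\<forall>x. N x \<le> C * lp_norm p x"
  shows "continuous_on UNIV N"
proof (rule is_norm_continuous[OF assms(1)])
  show "N x \<le> (max 0 C * real CARD('m) powr (1 / p)) * norm x" for x
  proof -
    have "N x \<le> max 0 C * lp_norm p x"
      using assms(3) by (meson max.cobounded2 mult_right_mono order_trans powr_ge_zero)
    also have "\<dots> \<le> max 0 C * (real CARD('m) powr (1 / p) * norm x)"
      using lp_norm_le_norm[OF assms(2)] by (intro mult_left_mono) auto
    finally show ?thesis by simp
  qed
qed simp

lemma norm_le_mult_is_norm: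
  fixes N :: "'a::euclidean_space \<Rightarrow> real"
  assumes N: "is_norm N" and cont: "continuous_on UNIV N"
  shows "\<exists>c>0. \<forall>x. norm x \<le> c * N x"
proof -
  obtain v :: 'a where "norm v = 1" using vector_choose_size[of 1] by auto
  then have "sphere (0::'a) 1 \<noteq> {}" by auto
  then obtain x0 where x0: "x0 \<in> sphere 0 1" "\<forall>y\<in>sphere 0 1. N x0 \<le> N y"
    using continuous_attains_inf[OF compact_sphere _ continuous_on_subset[OF cont]] by blast
  have pos: "0 < N x0"
    using x0(1) is_normD(1,2)[OF N, of x0] by (auto simp: less_le)
  have "norm x \<le> (1 / N x0) * N x" for x
  proof (cases "x = 0")
    case False
    then have "N x0 \<le> N ((1 / norm x) *\<^sub>R x)" using x0 by simp
    also have "\<dots> = N x / norm x" using is_normD(3)[OF N] by simp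
    finally show ?thesis using False pos by (simp add: field_simps)
  qed (use is_normD(2)[OF N, of 0] in simp)
  then show ?thesis using pos by (intro exI[of _ "1 / N x0"]) auto
qed

lemma is_norm_powr_le_of_componentwise:
  fixes N :: "real^'m \<Rightarrow> real"
  assumes "is_norm N" "0 < p" "0 \<le> C" "\<forall>x. N x \<le> C * lp_norm p x"
    and e: "\<And>i. \<bar>x $ i\<bar> \<le> e i"
  shows "N x powr p \<le> C powr p * (\<Sum>i\<in>UNIV. e i powr p)"
proof -
  have S0: "0 \<le> (\<Sum>i\<in>UNIV. e i powr p)" by (auto intro: sum_nonneg)
  have "N x \<le> C * lp_norm p x" using assms(4) by blast
  also have "\<dots> \<le> C * (\<Sum>i\<in>UNIV. e i powr p) powr (1 / p)"
    using assms(2,3) e by (intro mult_left_mono powr_mono2 sum_mono) (auto intro: sum_nonneg)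
  finally have "N x powr p \<le> (C * (\<Sum>i\<in>UNIV. e i powr p) powr (1 / p)) powr p"
    using is_normD(1)[OF assms(1)] assms(2) by (intro powr_mono2) auto
  also have "\<dots> = C powr p * (\<Sum>i\<in>UNIV. e i powr p)"
    using assms(2,3) S0 by (simp add: powr_mult powr_powr)
  finally show ?thesis .
qed

lemma Pp_integrable_component_powr:
  fixes N :: "real^'m \<Rightarrow> real"
  assumes N: "is_norm N" "continuous_on UNIV N" and p: "0 \<le> p" and \<mu>: "\<mu> \<in> Pp N p"
  shows "integrable \<mu> (\<lambda>x. \<bar>x $ i\<bar> powr p)"
proof -
  have sets: "sets \<mu> = sets borel" and iN: "integrable \<mu> (\<lambda>x. N x powr p)"
    using \<mu> by (auto simp: Pp_def)
  obtain c where c: "0 < c" "\<And>x. norm x \<le> c * N x" using norm_le_mult_is_norm[OF N] by blast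
  have [measurable_cong]: "sets \<mu> = sets borel" by (rule sets)
  show ?thesis
  proof (rule Bochner_Integration.integrable_bound)
    show "integrable \<mu> (\<lambda>x. c powr p * N x powr p)" using iN by auto
    have "\<bar>x $ i\<bar> powr p \<le> c powr p * N x powr p" for x
    proof -
      have "\<bar>x $ i\<bar> \<le> c * N x" using component_le_norm_cart[of x i] c(2)[of x] by linarith
      then have "\<bar>x $ i\<bar> powr p \<le> (c * N x) powr p" using p by (intro powr_mono2) auto
      also have "\<dots> = c powr p * N x powr p" using c(1) is_normD(1)[OF N(1)] by (simp add: powr_mult)
      finally show ?thesis .
    qed
    then show "AE x in \<mu>. norm (\<bar>x $ i\<bar> powr p) \<le> norm (c powr p * N x powr p)"
      by (auto intro!: AE_I2)
  qed measurable
qed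

lemma Pp_integrable_component:
  fixes N :: "real^'m \<Rightarrow> real"
  assumes "is_norm N" "continuous_on UNIV N" "1 \<le> p" "\<mu> \<in> Pp N p"
  shows "integrable \<mu> (\<lambda>x. x $ i)"
proof (rule integrable_of_integrable_abs_powr)
  show "finite_measure \<mu>" using assms(4) by (auto simp: Pp_def prob_space.axioms(1))
  show "(\<lambda>x. x $ i) \<in> borel_measurable \<mu>" using assms(4) by (auto simp: Pp_def)
qed (use Pp_integrable_component_powr[OF assms(1,2) _ assms(4)] assms(3) in auto)

lemma Pp_integrable_of_linear_bound:
  fixes N :: "real^'m \<Rightarrow> real"
  assumes "is_norm N" "continuous_on UNIV N" "1 \<le> p" and \<mu>: "\<mu> \<in> Pp N p"
    and g: "g \<in> borel_measurable borel" and bound: "\<And>x. \<bar>g x\<bar> \<le> K + (\<Sum>i\<in>UNIV. \<bar>x $ i\<bar>)"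
  shows "integrable \<mu> g"
proof -
  interpret prob_space \<mu> using \<mu> by (simp add: Pp_def)
  show ?thesis
  proof (rule Bochner_Integration.integrable_bound)
    show "integrable \<mu> (\<lambda>x. K + (\<Sum>i\<in>UNIV. \<bar>x $ i\<bar>))"
      using Pp_integrable_component[OF assms(1-4)] by auto
    show "g \<in> borel_measurable \<mu>" using g \<mu> measurable_cong_sets by (auto simp: Pp_def)
    show "AE x in \<mu>. norm (g x) \<le> norm (K + (\<Sum>i\<in>UNIV. \<bar>x $ i\<bar>))"
      using bound by (auto intro!: AE_I2 order_trans[OF _ abs_ge_self])
  qed
qed

lemma eq_class_integrable_eq:
  assumes \<nu>: "\<nu> \<in> eq_class N p G \<mu>" and g: "g \<in> G" and p: "1 \<le> p"
  shows "integrable \<nu> g" "(\<integral>x. g x \<partial>\<nu>) = (\<integral>x. g x \<partial>\<mu>)"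
proof -
  have "\<nu> \<in> PpG N p G" using \<nu> by (simp add: eq_class_def)
  then have \<nu>': "prob_space \<nu>" "sets \<nu> = sets borel"
    and "g \<in> borel_measurable borel" "integrable \<nu> (\<lambda>x. \<bar>g x\<bar> powr p)"
    using g by (auto simp: PpG_def Pp_def)
  moreover have "g \<in> borel_measurable \<nu>"
    by (subst measurable_cong_sets[OF \<nu>'(2) refl]) fact
  ultimately show "integrable \<nu> g"
    using integrable_of_integrable_abs_powr[OF prob_space.axioms(1) p] by blast
  show "(\<integral>x. g x \<partial>\<nu>) = (\<integral>x. g x \<partial>\<mu>)" using \<nu> g by (simp add: eq_class_def)
qed

definition tail_moment :: "real \<Rightarrow> (real^'m) measure \<Rightarrow> real \<Rightarrow> real" where
  "tail_moment p \<mu> K = (\<Sum>i\<in>UNIV. \<integral>x. max 0 (- K - x $ i) powr p + max 0 (x $ i - K) powr p \<partial>\<mu>)"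

lemma tail_powr_le:
  fixes t K p :: real
  assumes "0 \<le> K" "0 < p"
  shows "max 0 (- K - t) powr p + max 0 (t - K) powr p \<le> 2 * \<bar>t\<bar> powr p"
proof -
  have "max 0 (- K - t) powr p \<le> \<bar>t\<bar> powr p" "max 0 (t - K) powr p \<le> \<bar>t\<bar> powr p"
    using assms by (auto intro!: powr_mono2)
  then show ?thesis by simp
qed

lemma Pp_integrable_tail:
  fixes N :: "real^'m \<Rightarrow> real"
  assumes "is_norm N" "continuous_on UNIV N" "0 < p" "\<mu> \<in> Pp N p" "0 \<le> K"
  shows "integrable \<mu> (\<lambda>x. max 0 (- K - x $ i) powr p + max 0 (x $ i - K) powr p)"
proof (rule Bochner_Integration.integrable_bound)
  have [measurable_cong]: "sets \<mu> = sets borel" using assms(4) by (simp add: Pp_def)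
  show "integrable \<mu> (\<lambda>x. 2 * \<bar>x $ i\<bar> powr p)"
    using Pp_integrable_component_powr[OF assms(1,2) _ assms(4)] assms(3) by simp
  show "AE x in \<mu>. norm (max 0 (- K - x $ i) powr p + max 0 (x $ i - K) powr p)
      \<le> norm (2 * \<bar>x $ i\<bar> powr p)"
    using tail_powr_le[OF assms(5,3)] by (intro AE_I2) simp
  show "(\<lambda>x. max 0 (- K - x $ i) powr p + max 0 (x $ i - K) powr p) \<in> borel_measurable \<mu>"
    by measurable
qed

lemma tail_moment_tendsto_0:
  fixes N :: "real^'m \<Rightarrow> real"
  assumes "is_norm N" "continuous_on UNIV N" "0 < p" and \<mu>: "\<mu> \<in> Pp N p"
  shows "(\<lambda>k. tail_moment p \<mu> (real k)) \<longlonglongrightarrow> 0"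
proof -
  have [measurable_cong]: "sets \<mu> = sets borel" using \<mu> by (simp add: Pp_def)
  define s where "s i k x = max 0 (- real k - x $ i) powr p + max 0 (x $ i - real k) powr p"
    for i k and x :: "real^'m"
  have lim: "AE x in \<mu>. (\<lambda>k. s i k x) \<longlonglongrightarrow> 0" for i
  proof (rule AE_I2, rule tendsto_eventually)
    fix x :: "real^'m"
    obtain k0 :: nat where "\<bar>x $ i\<bar> < real k0" using reals_Archimedean2 by blast
    then show "\<forall>\<^sub>F k in sequentially. s i k x = 0"
      unfolding eventually_sequentially s_def by (intro exI[of _ k0]) auto
  qed
  have "(\<lambda>k. \<integral>x. s i k x \<partial>\<mu>) \<longlonglongrightarrow> (\<integral>x. 0 \<partial>\<mu>)" for i
  proof (rule integral_dominated_convergence[OF _ _ _ lim])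
    show "integrable \<mu> (\<lambda>x. 2 * \<bar>x $ i\<bar> powr p)"
      using Pp_integrable_component_powr[OF assms(1,2) _ \<mu>] assms(3) by simp
    show "AE x in \<mu>. norm (s i k x) \<le> 2 * \<bar>x $ i\<bar> powr p" for k
      using tail_powr_le[of "real k" p] assms(3) by (intro AE_I2) (simp add: s_def)
  qed (auto simp: s_def)
  then have "(\<lambda>k. \<Sum>i\<in>UNIV. \<integral>x. s i k x \<partial>\<mu>) \<longlonglongrightarrow> (\<Sum>i\<in>(UNIV::'m set). 0)"
    by (intro tendsto_sum) simp
  then show ?thesis by (simp add: tail_moment_def s_def)
qed

lemma exists_tail_moment_powr_less:
  fixes N :: "real^'m \<Rightarrow> real"
  assumes "is_norm N" "continuous_on UNIV N" "0 < p" "\<mu> \<in> Pp N p" "0 < \<delta>"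
  shows "\<exists>K::nat. tail_moment p \<mu> (real K) powr (1 / p) < \<delta>"
proof -
  have "(\<lambda>k. tail_moment p \<mu> (real k) powr (1 / p)) \<longlonglongrightarrow> 0 powr (1 / p)"
    using tail_moment_tendsto_0[OF assms(1-4)] assms(3)
    by (intro tendsto_intros) (auto simp: tail_moment_def intro!: always_eventually sum_nonneg integral_nonneg_AE)
  then have "\<forall>\<^sub>F k in sequentially. tail_moment p \<mu> (real k) powr (1 / p) < \<delta>"
    using assms(3,5) by (intro order_tendstoD(2)) auto
  then show ?thesis unfolding eventually_sequentially by auto
qed

section \<open>Couplings\<close>

lemma couplings_integral_fst:
  fixes f :: "'a::euclidean_space \<Rightarrow> real"
  assumes "\<pi> \<in> couplings M M'" "f \<in> borel_measurable borel"
  shows "integrable \<pi> (\<lambda>z. f (fst z)) \<longleftrightarrow> integrable M f"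
    and "(\<integral>z. f (fst z) \<partial>\<pi>) = (\<integral>x. f x \<partial>M)"
proof -
  have "fst \<in> measurable \<pi> borel" "distr \<pi> borel fst = M"
    using assms(1) measurable_cong_sets by (auto simp: couplings_def)
  then show "integrable \<pi> (\<lambda>z. f (fst z)) \<longleftrightarrow> integrable M f"
    and "(\<integral>z. f (fst z) \<partial>\<pi>) = (\<integral>x. f x \<partial>M)"
    using integrable_distr_eq[of fst \<pi> borel f] integral_distr[of fst \<pi> borel f] assms(2) by simp_all
qed

lemma couplings_integral_snd:
  fixes f :: "'a::euclidean_space \<Rightarrow> real"
  assumes "\<pi> \<in> couplings M M'" "f \<in> borel_measurable borel"
  shows "integrable \<pi> (\<lambda>z. f (snd z)) \<longleftrightarrow> integrable M' f"
    and "(\<integral>z. f (snd z) \<partial>\<pi>) = (\<integral>x. f x \<partial>M')"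
proof -
  have "snd \<in> measurable \<pi> borel" "distr \<pi> borel snd = M'"
    using assms(1) measurable_cong_sets by (auto simp: couplings_def)
  then show "integrable \<pi> (\<lambda>z. f (snd z)) \<longleftrightarrow> integrable M' f"
    and "(\<integral>z. f (snd z) \<partial>\<pi>) = (\<integral>x. f x \<partial>M')"
    using integrable_distr_eq[of snd \<pi> borel f] integral_distr[of snd \<pi> borel f] assms(2) by simp_all
qed

lemma Wp_le_of_coupling:
  assumes "\<pi> \<in> couplings M M'" "0 \<le> c" "0 < p"
    and "(\<integral>\<^sup>+z. ennreal (N (fst z - snd z) powr p) \<partial>\<pi>) \<le> ennreal c"
  shows "Wp N p M M' \<le> c powr (1 / p)"
proof -
  have "(INF \<pi>\<in>couplings M M'. \<integral>\<^sup>+z. ennreal (N (fst z - snd z) powr p) \<partial>\<pi>) \<le> ennreal c"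
    using assms by (meson INF_lower2)
  then have "enn2real (INF \<pi>\<in>couplings M M'. \<integral>\<^sup>+z. ennreal (N (fst z - snd z) powr p) \<partial>\<pi>) \<le> c"
    using assms(2) by (metis enn2real_ennreal enn2real_mono ennreal_less_top)
  then show ?thesis unfolding Wp_def using assms(3) by (intro powr_mono2) auto
qed

lemma Wp_le_of_coordinatewise_coupling:
  fixes N :: "real^'m \<Rightarrow> real" and d :: "'m \<Rightarrow> real^'m \<Rightarrow> real"
  assumes N: "is_norm N" "continuous_on UNIV N" and p: "1 \<le> p" and C: "0 \<le> C"
    and NC: "\<forall>x. N x \<le> C * lp_norm p x"
    and \<pi>: "\<pi> \<in> couplings M M'" and a: "0 \<le> a"
    and d0: "\<And>i x. 0 \<le> d i x" and dm: "\<And>i. d i \<in> borel_measurable borel"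
    and dM: "\<And>i. integrable M (\<lambda>x. d i x powr p)" and dM': "\<And>i. integrable M' (\<lambda>x. d i x powr p)"
    and close: "AE z in \<pi>. \<forall>i. \<bar>fst z $ i - snd z $ i\<bar> \<le> a + d i (fst z) + d i (snd z)"
  shows "Wp N p M M' \<le> C * (a * real CARD('m) powr (1 / p)
      + (\<Sum>i\<in>UNIV. \<integral>x. d i x powr p \<partial>M) powr (1 / p)
      + (\<Sum>i\<in>UNIV. \<integral>x. d i x powr p \<partial>M') powr (1 / p))"
proof -
  interpret \<pi>: prob_space \<pi> using \<pi> by (simp add: couplings_def)
  have [measurable_cong]: "sets \<pi> = sets (borel \<Otimes>\<^sub>M borel)" using \<pi> by (simp add: couplings_def)
  have [measurable]: "N \<in> borel_measurable borel" "\<And>i. d i \<in> borel_measurable borel"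
    using borel_measurable_continuous_onI[OF N(2)] dm by auto
  have dpm: "(\<lambda>x. d i x powr p) \<in> borel_measurable borel" for i by measurable
  have p0: "0 < p" using p by simp
  have int_fst: "integrable \<pi> (\<lambda>z. d i (fst z) powr p)" for i
    using couplings_integral_fst(1)[OF \<pi> dpm] dM by simp
  have int_snd: "integrable \<pi> (\<lambda>z. d i (snd z) powr p)" for i
    using couplings_integral_snd(1)[OF \<pi> dpm] dM' by simp
  define X where "X = (\<Sum>i\<in>UNIV. \<integral>z. (a + d i (fst z) + d i (snd z)) powr p \<partial>\<pi>)"
  have int_sum: "integrable \<pi> (\<lambda>z. (a + d i (fst z) + d i (snd z)) powr p)" for i
  proof (rule integrable_powr_add[OF p])
    show "integrable \<pi> (\<lambda>z. (a + d i (fst z)) powr p)"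
      by (rule integrable_powr_add[OF p]) (use a d0 int_fst in auto)
  qed (use a d0 int_snd in \<open>auto intro: add_nonneg_nonneg\<close>)
  have X0: "0 \<le> X" unfolding X_def by (auto intro!: sum_nonneg integral_nonneg_AE)
  have "(\<integral>\<^sup>+z. ennreal (N (fst z - snd z) powr p) \<partial>\<pi>)
      \<le> (\<integral>\<^sup>+z. ennreal (C powr p * (\<Sum>i\<in>UNIV. (a + d i (fst z) + d i (snd z)) powr p)) \<partial>\<pi>)"
    using close
    by (intro nn_integral_mono_AE, elim AE_mp)
       (auto intro!: AE_I2 ennreal_leI is_norm_powr_le_of_componentwise[OF N(1) p0 C NC])
  also have "\<dots> = ennreal (C powr p * X)"
    unfolding X_def using int_sum a d0
    by (subst nn_integral_eq_integral)
       (auto intro!: AE_I2 mult_nonneg_nonneg sum_nonneg add_nonneg_nonneg simp: Bochner_Integration.integral_sum)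
  finally have "Wp N p M M' \<le> (C powr p * X) powr (1 / p)"
    using \<pi> C X0 p0 by (intro Wp_le_of_coupling) auto
  also have "\<dots> = C * X powr (1 / p)" using C X0 p0 by (simp add: powr_mult powr_powr)
  also have "X powr (1 / p) \<le> a * real CARD('m) powr (1 / p)
      + (\<Sum>i\<in>UNIV. \<integral>z. d i (fst z) powr p \<partial>\<pi>) powr (1 / p)
      + (\<Sum>i\<in>UNIV. \<integral>z. d i (snd z) powr p \<partial>\<pi>) powr (1 / p)"
    unfolding X_def by (rule \<pi>.minkowski_sum_integral_const_add) (use p a d0 int_fst int_snd in auto)
  finally show ?thesis
    using C couplings_integral_fst(2)[OF \<pi> dpm] couplings_integral_snd(2)[OF \<pi> dpm]
    by (simp add: mult_left_mono)
qed

lemma emeasure_density_pair_fst: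
  assumes "sigma_finite_measure M'" and W: "W \<in> borel_measurable (M \<Otimes>\<^sub>M M')" and A: "A \<in> sets M"
    and total: "AE x in M. (\<integral>\<^sup>+y. W (x, y) \<partial>M') = 1"
  shows "emeasure (density (M \<Otimes>\<^sub>M M') W) (A \<times> space M') = emeasure M A"
proof -
  interpret M': sigma_finite_measure M' by fact
  have AM: "A \<times> space M' \<in> sets (M \<Otimes>\<^sub>M M')" using A by (rule pair_measureI[OF _ sets.top])
  have "emeasure (density (M \<Otimes>\<^sub>M M') W) (A \<times> space M')
      = (\<integral>\<^sup>+z. W z * indicator (A \<times> space M') z \<partial>(M \<Otimes>\<^sub>M M'))"
    using W AM by (intro emeasure_density) auto
  also have "\<dots> = (\<integral>\<^sup>+x. \<integral>\<^sup>+y. W (x, y) * indicator (A \<times> space M') (x, y) \<partial>M' \<partial>M)"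
    by (intro M'.nn_integral_fst[symmetric] borel_measurable_times_ennreal W borel_measurable_indicator AM)
  also have "\<dots> = (\<integral>\<^sup>+x. (\<integral>\<^sup>+y. W (x, y) \<partial>M') * indicator A x \<partial>M)"
  proof (intro nn_integral_cong)
    fix x assume "x \<in> space M"
    then have "(\<integral>\<^sup>+y. W (x, y) * indicator (A \<times> space M') (x, y) \<partial>M')
        = (\<integral>\<^sup>+y. W (x, y) * indicator A x \<partial>M')"
      by (intro nn_integral_cong) (simp add: indicator_times)
    also have "\<dots> = (\<integral>\<^sup>+y. W (x, y) \<partial>M') * indicator A x"
      using measurable_Pair2[OF W \<open>x \<in> space M\<close>] by (rule nn_integral_multc)
    finally show "(\<integral>\<^sup>+y. W (x, y) * indicator (A \<times> space M') (x, y) \<partial>M')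
        = (\<integral>\<^sup>+y. W (x, y) \<partial>M') * indicator A x" .
  qed
  also have "\<dots> = (\<integral>\<^sup>+x. indicator A x \<partial>M)"
    using total by (intro nn_integral_cong_AE) auto
  finally show ?thesis using A by simp
qed

lemma emeasure_density_pair_snd:
  assumes "pair_sigma_finite M M'" and W: "W \<in> borel_measurable (M \<Otimes>\<^sub>M M')" and B: "B \<in> sets M'"
    and total: "AE y in M'. (\<integral>\<^sup>+x. W (x, y) \<partial>M) = 1"
  shows "emeasure (density (M \<Otimes>\<^sub>M M') W) (space M \<times> B) = emeasure M' B"
proof -
  interpret pair_sigma_finite M M' by fact
  have BM: "space M \<times> B \<in> sets (M \<Otimes>\<^sub>M M')" using B by (rule pair_measureI[OF sets.top])
  have "emeasure (density (M \<Otimes>\<^sub>M M') W) (space M \<times> B)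
      = (\<integral>\<^sup>+z. W z * indicator (space M \<times> B) z \<partial>(M \<Otimes>\<^sub>M M'))"
    using W BM by (intro emeasure_density) auto
  also have "\<dots> = (\<integral>\<^sup>+y. \<integral>\<^sup>+x. W (x, y) * indicator (space M \<times> B) (x, y) \<partial>M \<partial>M')"
    by (intro nn_integral_snd[symmetric] borel_measurable_times_ennreal W borel_measurable_indicator BM)
  also have "\<dots> = (\<integral>\<^sup>+y. (\<integral>\<^sup>+x. W (x, y) \<partial>M) * indicator B y \<partial>M')"
  proof (intro nn_integral_cong)
    fix y assume "y \<in> space M'"
    then have "(\<integral>\<^sup>+x. W (x, y) * indicator (space M \<times> B) (x, y) \<partial>M)
        = (\<integral>\<^sup>+x. W (x, y) * indicator B y \<partial>M)"
      by (intro nn_integral_cong) (simp add: indicator_times)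
    also have "\<dots> = (\<integral>\<^sup>+x. W (x, y) \<partial>M) * indicator B y"
      using measurable_Pair1[OF W \<open>y \<in> space M'\<close>] by (rule nn_integral_multc)
    finally show "(\<integral>\<^sup>+x. W (x, y) * indicator (space M \<times> B) (x, y) \<partial>M)
        = (\<integral>\<^sup>+x. W (x, y) \<partial>M) * indicator B y" .
  qed
  also have "\<dots> = (\<integral>\<^sup>+y. indicator B y \<partial>M')"
    using total by (intro nn_integral_cong_AE) auto
  finally show ?thesis using B by simp
qed

lemma density_pair_in_couplings:
  fixes M M' :: "'a::euclidean_space measure"
  assumes M: "prob_space M" "sets M = sets borel" and M': "prob_space M'" "sets M' = sets borel"
    and W: "W \<in> borel_measurable (M \<Otimes>\<^sub>M M')"
    and total_fst: "AE x in M. (\<integral>\<^sup>+y. W (x, y) \<partial>M') = 1"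
    and total_snd: "AE y in M'. (\<integral>\<^sup>+x. W (x, y) \<partial>M) = 1"
  shows "density (M \<Otimes>\<^sub>M M') W \<in> couplings M M'"
proof -
  interpret M: prob_space M by fact
  interpret M': prob_space M' by fact
  interpret P: pair_sigma_finite M M' by unfold_locales
  define \<pi> where "\<pi> = density (M \<Otimes>\<^sub>M M') W"
  have space: "space M = UNIV" "space M' = UNIV"
    using sets_eq_imp_space_eq[OF M(2)] sets_eq_imp_space_eq[OF M'(2)] by auto
  have sets_\<pi>: "sets \<pi> = sets (borel \<Otimes>\<^sub>M borel)"
    unfolding \<pi>_def using sets_pair_measure_cong[OF M(2) M'(2)] by simp
  have space_\<pi>: "space \<pi> = UNIV" unfolding \<pi>_def by (simp add: space_pair_measure space)
  have fst: "emeasure \<pi> (A \<times> UNIV) = emeasure M A" if "A \<in> sets borel" for A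
    using emeasure_density_pair_fst[OF _ W _ total_fst] that M(2) space
    by (simp add: \<pi>_def M'.sigma_finite_measure_axioms)
  have snd: "emeasure \<pi> (UNIV \<times> B) = emeasure M' B" if "B \<in> sets borel" for B
    using emeasure_density_pair_snd[OF _ W _ total_snd] that M'(2) space
    by (simp add: \<pi>_def P.pair_sigma_finite_axioms)
  have "prob_space \<pi>"
    by (rule prob_spaceI) (simp add: space_\<pi> fst[of UNIV, simplified] M.emeasure_space_1[unfolded space])
  moreover have "distr \<pi> borel fst = M"
  proof (rule measure_eqI)
    fix A assume "A \<in> sets (distr \<pi> borel fst)"
    moreover have "fst -` A \<inter> space \<pi> = A \<times> UNIV" by (auto simp: space_\<pi>)
    ultimately show "emeasure (distr \<pi> borel fst) A = emeasure M A"
      using emeasure_distr[of fst \<pi> borel A] measurable_cong_sets[OF sets_\<pi> refl] fst by auto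
  qed (simp add: M(2))
  moreover have "distr \<pi> borel snd = M'"
  proof (rule measure_eqI)
    fix B assume "B \<in> sets (distr \<pi> borel snd)"
    moreover have "snd -` B \<inter> space \<pi> = UNIV \<times> B" by (auto simp: space_\<pi>)
    ultimately show "emeasure (distr \<pi> borel snd) B = emeasure M' B"
      using emeasure_distr[of snd \<pi> borel B] measurable_cong_sets[OF sets_\<pi> refl] snd by auto
  qed (simp add: M'(2))
  ultimately show ?thesis using sets_\<pi> by (simp add: couplings_def \<pi>_def)
qed

section \<open>Randomised rounding to a grid of knots\<close>

definition ramp :: "real \<Rightarrow> real" where
  "ramp s = min 1 (max 0 s)"

lemma ramp_mono: "s \<le> t \<Longrightarrow> ramp s \<le> ramp t"
  by (simp add: ramp_def)

lemma ramp_bounds: "0 \<le> ramp s" "ramp s \<le> 1"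
  by (auto simp: ramp_def)

lemma ramp_divide_eq: "0 < b \<Longrightarrow> ramp (s / b) = (max 0 s - max 0 (s - b)) / b"
  by (auto simp: ramp_def max_def min_def field_simps)

locale knot_grid =
  fixes kl :: "'m::finite \<Rightarrow> real" and \<beta> :: real and n :: "'m \<Rightarrow> nat"
  assumes beta_pos: "0 < \<beta>"
begin

text \<open>The value t of coordinate i is rounded at random to a knot index, which is at most j
  with probability rounding_cdf i t j: a point between two adjacent knots goes to one of them,
  a point outside [kappa i 0, kappa i (n i)] to the nearest end knot.\<close>
definition rounding_cdf :: "'m \<Rightarrow> real \<Rightarrow> nat \<Rightarrow> real" where
  "rounding_cdf i t j = (if n i \<le> j then 1 else 1 - ramp ((t - kappa kl \<beta> i j) / \<beta>))"

definition rounding_cdf_prev :: "('m \<Rightarrow> nat) \<Rightarrow> 'm \<Rightarrow> real \<Rightarrow> real" where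
  "rounding_cdf_prev r i t = (if r i = 0 then 0 else rounding_cdf i t (r i - 1))"

text \<open>All coordinates are rounded with the same uniform u in (0, 1] (a comonotone coupling);
  cell r x is the set of u for which x is rounded to the grid point r.\<close>
definition cell :: "('m \<Rightarrow> nat) \<Rightarrow> real^'m \<Rightarrow> real set" where
  "cell r x = {u. \<forall>i. rounding_cdf_prev r i (x $ i) < u \<and> u \<le> rounding_cdf i (x $ i) (r i)}"

definition cell_weight :: "('m \<Rightarrow> nat) \<Rightarrow> real^'m \<Rightarrow> real" where
  "cell_weight r x = measure lborel (cell r x)"

definition grid :: "('m \<Rightarrow> nat) set" where
  "grid = {r. \<forall>i. r i \<le> n i}"

lemma finite_grid: "finite grid"
proof -
  have "grid = Pi\<^sub>E UNIV (\<lambda>i. {..n i})" by (auto simp: grid_def PiE_def extensional_def Pi_def)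
  then show ?thesis by (simp add: finite_PiE)
qed

lemma kappa_mono: "j \<le> j' \<Longrightarrow> kappa kl \<beta> i j \<le> kappa kl \<beta> i j'"
  using beta_pos by (simp add: kappa_def mult_right_mono)

lemma kappa_Suc: "kappa kl \<beta> i (Suc j) = kappa kl \<beta> i j + \<beta>"
  by (simp add: kappa_def algebra_simps)

lemma rounding_cdf_bounds: "0 \<le> rounding_cdf i t j" "rounding_cdf i t j \<le> 1"
  using ramp_bounds by (auto simp: rounding_cdf_def)

lemma rounding_cdf_mono:
  assumes "j \<le> j'" shows "rounding_cdf i t j \<le> rounding_cdf i t j'"
proof (cases "n i \<le> j'")
  case False
  have "(t - kappa kl \<beta> i j') / \<beta> \<le> (t - kappa kl \<beta> i j) / \<beta>"
    using kappa_mono[OF assms, of i] beta_pos by (simp add: divide_right_mono)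
  then show ?thesis using False assms ramp_mono by (auto simp: rounding_cdf_def)
qed (use rounding_cdf_bounds in \<open>simp add: rounding_cdf_def[of i t j']\<close>)

lemma rounding_cdf_pos_imp_less:
  assumes "j < n i" "0 < rounding_cdf i t j"
  shows "t < kappa kl \<beta> i j + \<beta>"
proof -
  have "(t - kappa kl \<beta> i j) / \<beta> < 1"
    using assms by (auto simp: rounding_cdf_def ramp_def)
  then show ?thesis using beta_pos by (simp add: field_simps)
qed

lemma rounding_cdf_less_1_imp_greater:
  assumes "rounding_cdf i t j < 1"
  shows "kappa kl \<beta> i j < t"
proof -
  have "0 < (t - kappa kl \<beta> i j) / \<beta>"
    using assms by (auto simp: rounding_cdf_def ramp_def split: if_splits)
  then show ?thesis using beta_pos by (simp add: field_simps)
qed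

lemma rounding_cdf_prev_nonneg: "0 \<le> rounding_cdf_prev r i t"
  using rounding_cdf_bounds by (simp add: rounding_cdf_prev_def)

lemma cell_eq:
  "cell r x = {(MAX i. rounding_cdf_prev r i (x $ i)) <.. (MIN i. rounding_cdf i (x $ i) (r i))}"
  by (auto simp: cell_def)

lemma cell_weight_eq:
  "cell_weight r x = max 0 ((MIN i. rounding_cdf i (x $ i) (r i)) - (MAX i. rounding_cdf_prev r i (x $ i)))"
proof -
  have "measure lborel {a <.. b} = max 0 (b - a)" for a b :: real
    by (cases "a \<le> b") auto
  then show ?thesis unfolding cell_weight_def cell_eq .
qed

lemma cell_weight_nonneg: "0 \<le> cell_weight r x"
  by (simp add: cell_weight_eq)

lemma cell_weight_le_1: "cell_weight r x \<le> 1"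
proof -
  fix i
  have "(MIN i. rounding_cdf i (x $ i) (r i)) \<le> rounding_cdf i (x $ i) (r i)"
    and "rounding_cdf_prev r i (x $ i) \<le> (MAX i. rounding_cdf_prev r i (x $ i))"
    by (auto intro: Min_le Max_ge)
  then show ?thesis
    using rounding_cdf_bounds[of i "x $ i" "r i"] rounding_cdf_prev_nonneg[of r i "x $ i"]
    unfolding cell_weight_eq by linarith
qed

lemma borel_measurable_cell_weight [measurable]: "cell_weight r \<in> borel_measurable borel"
proof -
  have [measurable]: "(\<lambda>x. rounding_cdf i (x $ i) j) \<in> borel_measurable borel" for i j
    unfolding rounding_cdf_def ramp_def by measurable
  have [measurable]: "(\<lambda>x. rounding_cdf_prev r i (x $ i)) \<in> borel_measurable borel" for i
    unfolding rounding_cdf_prev_def by measurable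
  show ?thesis unfolding cell_weight_eq[abs_def] by measurable
qed

lemma disjoint_family_cell: "disjoint_family_on (\<lambda>r. cell r x) A"
unfolding disjoint_family_on_def proof (intro ballI impI)
  fix r r' assume "r \<in> A" "r' \<in> A" "r \<noteq> r'"
  then obtain i where ne: "r i \<noteq> r' i" by auto
  have *: False if "u \<in> cell s x" "u \<in> cell s' x" "s i < s' i" for u s s'
  proof -
    have "u \<le> rounding_cdf i (x $ i) (s i)" using that(1) by (auto simp: cell_def)
    also have "\<dots> \<le> rounding_cdf i (x $ i) (s' i - 1)" using that(3) by (intro rounding_cdf_mono) auto
    also have "\<dots> < u" using that(2,3) by (auto simp: cell_def rounding_cdf_prev_def split: if_splits)
    finally show False by simp
  qed
  show "cell r x \<inter> cell r' x = {}"
    using ne *[of _ r r'] *[of _ r' r] by (cases "r i < r' i") auto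
qed

lemma UN_cell_le:
  assumes "k \<in> grid"
  shows "(\<Union>r\<in>{r\<in>grid. r \<le> k}. cell r x) = {0 <.. (MIN i. rounding_cdf i (x $ i) (k i))}"
proof (intro equalityI subsetI)
  fix u assume "u \<in> (\<Union>r\<in>{r\<in>grid. r \<le> k}. cell r x)"
  then obtain r where r: "r \<le> k" "u \<in> cell r x" by auto
  have "0 < u" using r(2) rounding_cdf_prev_nonneg by (auto simp: cell_def) (meson le_less_trans)
  moreover have "u \<le> rounding_cdf i (x $ i) (k i)" for i
    using r by (auto simp: cell_def le_fun_def intro: order_trans[OF _ rounding_cdf_mono])
  ultimately show "u \<in> {0 <.. (MIN i. rounding_cdf i (x $ i) (k i))}" by auto
next
  fix u assume "u \<in> {0 <.. (MIN i. rounding_cdf i (x $ i) (k i))}"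
  then have u0: "0 < u" and uk: "\<And>i. u \<le> rounding_cdf i (x $ i) (k i)" by auto
  define r where "r i = (LEAST j. u \<le> rounding_cdf i (x $ i) j)" for i
  have rk: "r i \<le> k i" for i unfolding r_def by (rule Least_le) (rule uk)
  have "u \<le> rounding_cdf i (x $ i) (r i)" for i unfolding r_def by (rule LeastI) (rule uk)
  moreover have "rounding_cdf_prev r i (x $ i) < u" for i
  proof (cases "r i = 0")
    case False
    then have "\<not> u \<le> rounding_cdf i (x $ i) (r i - 1)" unfolding r_def by (intro not_less_Least) auto
    then show ?thesis using False by (simp add: rounding_cdf_prev_def)
  qed (simp add: u0 rounding_cdf_prev_def)
  moreover have "r \<in> grid" "r \<le> k" using rk assms by (auto simp: grid_def le_fun_def intro: order_trans)
  ultimately show "u \<in> (\<Union>r\<in>{r\<in>grid. r \<le> k}. cell r x)" by (auto simp: cell_def)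
qed

lemma sum_cell_weight_le:
  assumes "k \<in> grid"
  shows "(\<Sum>r\<in>{r\<in>grid. r \<le> k}. cell_weight r x) = (MIN i. rounding_cdf i (x $ i) (k i))"
proof -
  have "emeasure lborel {a <.. b} \<noteq> \<infinity>" for a b :: real
    by (cases "a \<le> b") auto
  then have fin: "emeasure lborel (cell r x) \<noteq> \<infinity>" for r
    unfolding cell_eq .
  have "(\<Sum>r\<in>{r\<in>grid. r \<le> k}. cell_weight r x) = measure lborel (\<Union>r\<in>{r\<in>grid. r \<le> k}. cell r x)"
    unfolding cell_weight_def
    by (rule measure_finite_Union[symmetric]) (use finite_grid disjoint_family_cell fin in \<open>auto simp: cell_eq\<close>)
  also have "\<dots> = (MIN i. rounding_cdf i (x $ i) (k i))"
    unfolding UN_cell_le[OF assms] using rounding_cdf_bounds by (simp add: Min_ge_iff)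
  finally show ?thesis .
qed

lemma sum_cell_weight: "(\<Sum>r\<in>grid. cell_weight r x) = 1"
proof -
  have "n \<in> grid" "{r\<in>grid. r \<le> n} = grid" by (auto simp: grid_def le_fun_def)
  then show ?thesis using sum_cell_weight_le[of n x] by (simp add: rounding_cdf_def)
qed

definition hinge_max :: "'m set \<Rightarrow> ('m \<Rightarrow> nat) \<Rightarrow> real^'m \<Rightarrow> real" where
  "hinge_max L j x = (if L = {} then 0 else max 0 (MAX i\<in>L. max 0 (x $ i - kappa kl \<beta> i (j i))))"

lemma hinge_max_in_G0: "(\<And>i. i \<in> L \<Longrightarrow> j i \<le> n i) \<Longrightarrow> hinge_max L j \<in> G0 kl \<beta> n"
  unfolding G0_def hinge_max_def[abs_def] by blast

lemma G0_hinge_max: "g \<in> G0 kl \<beta> n \<Longrightarrow> \<exists>L j. g = hinge_max L j"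
  unfolding G0_def hinge_max_def[abs_def] by blast

lemma borel_measurable_hinge_max [measurable]: "hinge_max L j \<in> borel_measurable borel"
  unfolding hinge_max_def[abs_def] by measurable

lemma abs_hinge_max_le: "\<bar>hinge_max L j x\<bar> \<le> (\<Sum>i\<in>UNIV. \<bar>kappa kl \<beta> i (j i)\<bar>) + (\<Sum>i\<in>UNIV. \<bar>x $ i\<bar>)"
proof -
  define h where "h i = max 0 (x $ i - kappa kl \<beta> i (j i))" for i
  have h0: "0 \<le> h i" for i by (simp add: h_def)
  have "\<bar>hinge_max L j x\<bar> \<le> (\<Sum>i\<in>UNIV. h i)"
  proof (cases "L = {}")
    case False
    have "(MAX i\<in>L. h i) \<le> (\<Sum>i\<in>UNIV. h i)"
      using False by (subst Max_le_iff) (auto intro!: member_le_sum h0)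
    then show ?thesis using False h0 by (simp add: hinge_max_def h_def[symmetric] sum_nonneg)
  qed (simp add: hinge_max_def h0 sum_nonneg)
  also have "\<dots> \<le> (\<Sum>i\<in>UNIV. \<bar>kappa kl \<beta> i (j i)\<bar> + \<bar>x $ i\<bar>)"
    by (intro sum_mono) (simp add: h_def)
  finally show ?thesis by (simp add: sum.distrib)
qed

text \<open>By sum_cell_weight_le, this writes the partial sums of the cell weights through two
  functions of G0.\<close>
lemma Min_rounding_cdf_eq_hinge_max:
  assumes "k \<in> grid"
  defines "L \<equiv> {i. k i < n i}"
  shows "(MIN i. rounding_cdf i (x $ i) (k i))
    = 1 - (hinge_max L k x - hinge_max L (\<lambda>i. Suc (k i)) x) / \<beta>"
proof (cases "L = {}")
  case True
  then show ?thesis by (auto simp: L_def not_less rounding_cdf_def hinge_max_def)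
next
  case False
  define s where "s i = x $ i - kappa kl \<beta> i (k i)" for i
  define M where "M = (MAX i\<in>L. s i)"
  have mono_commute: "(MAX i\<in>L. f (s i)) = f M" if "mono f" for f :: "real \<Rightarrow> real"
    using mono_Max_commute[OF that, of "s ` L"] False by (simp add: image_image M_def)
  have "hinge_max L k x = max 0 M"
    using False mono_commute[of "max 0"] by (simp add: hinge_max_def s_def monoI)
  moreover have "hinge_max L (\<lambda>i. Suc (k i)) x = max 0 (M - \<beta>)"
    using False mono_commute[of "\<lambda>t. max 0 (t - \<beta>)"]
    by (simp add: hinge_max_def kappa_Suc s_def monoI algebra_simps)
  moreover have "(MIN i. rounding_cdf i (x $ i) (k i)) = 1 - ramp (M / \<beta>)"
  proof (rule Min_eqI)
    fix y assume "y \<in> range (\<lambda>i. rounding_cdf i (x $ i) (k i))"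
    then obtain i where y: "y = rounding_cdf i (x $ i) (k i)" by auto
    show "1 - ramp (M / \<beta>) \<le> y"
    proof (cases "i \<in> L")
      case True
      then have "ramp (s i / \<beta>) \<le> ramp (M / \<beta>)"
        using beta_pos by (intro ramp_mono divide_right_mono) (auto simp: M_def)
      then show ?thesis using True by (simp add: y rounding_cdf_def L_def s_def)
    qed (use ramp_bounds[of "M / \<beta>"] in \<open>simp add: y rounding_cdf_def L_def\<close>)
  next
    have "M \<in> s ` L" unfolding M_def using False by (intro Max_in) auto
    then show "1 - ramp (M / \<beta>) \<in> range (\<lambda>i. rounding_cdf i (x $ i) (k i))"
      by (auto simp: rounding_cdf_def L_def s_def)
  qed simp
  ultimately show ?thesis using ramp_divide_eq[OF beta_pos, of M] by simp
qed

lemma integrable_cell_weight: "finite_measure M \<Longrightarrow> sets M = sets borel \<Longrightarrow> integrable M (cell_weight r)"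
  using cell_weight_nonneg cell_weight_le_1 measurable_cong_sets[of M borel]
  by (intro finite_measure.integrable_const_bound[where B=1]) auto

lemma sum_integral_cell_weight_le:
  assumes M: "prob_space M" "sets M = sets borel" and "k \<in> grid"
    and G0: "\<And>g. g \<in> G0 kl \<beta> n \<Longrightarrow> integrable M g"
  defines "L \<equiv> {i. k i < n i}"
  shows "(\<Sum>r\<in>{r\<in>grid. r \<le> k}. \<integral>x. cell_weight r x \<partial>M)
     = 1 - ((\<integral>x. hinge_max L k x \<partial>M) - (\<integral>x. hinge_max L (\<lambda>i. Suc (k i)) x \<partial>M)) / \<beta>"
proof -
  interpret prob_space M by fact
  have "hinge_max L k \<in> G0 kl \<beta> n" "hinge_max L (\<lambda>i. Suc (k i)) \<in> G0 kl \<beta> n"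
    using assms by (auto intro!: hinge_max_in_G0 simp: grid_def L_def)
  then have "integrable M (hinge_max L k)" "integrable M (hinge_max L (\<lambda>i. Suc (k i)))"
    using G0 by auto
  moreover have "(\<Sum>r\<in>{r\<in>grid. r \<le> k}. \<integral>x. cell_weight r x \<partial>M)
      = (\<integral>x. 1 - (hinge_max L k x - hinge_max L (\<lambda>i. Suc (k i)) x) / \<beta> \<partial>M)"
    using integrable_cell_weight[OF finite_measure_axioms M(2)]
    by (simp add: sum_cell_weight_le[OF assms(3)] Min_rounding_cdf_eq_hinge_max[OF assms(3)] L_def
        flip: Bochner_Integration.integral_sum)
  ultimately show ?thesis by (simp add: prob_space)
qed

text \<open>Moebius inversion over the grid, by induction on the size of k: the partial sums over
  r \<le> k are determined by G0, hence so is each single cell.\<close>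
lemma integral_cell_weight_eq_of_G0:
  assumes M: "prob_space M" "sets M = sets borel" and M': "prob_space M'" "sets M' = sets borel"
    and G0: "\<And>g. g \<in> G0 kl \<beta> n \<Longrightarrow> integrable M g \<and> integrable M' g \<and> (\<integral>x. g x \<partial>M') = (\<integral>x. g x \<partial>M)"
    and "k \<in> grid"
  shows "(\<integral>x. cell_weight k x \<partial>M') = (\<integral>x. cell_weight k x \<partial>M)"
  using \<open>k \<in> grid\<close>
proof (induction k rule: measure_induct_rule[where f="\<lambda>k. sum k UNIV"])
  case (less k)
  define Q where "Q M r = (\<integral>x. cell_weight r x \<partial>M)" for M r
  define below where "below = {r\<in>grid. r \<le> k} - {k}"
  have "Q M' r = Q M r" if "r \<in> below" for r
  proof (rule less.IH[unfolded Q_def[symmetric]])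
    from that have "r \<le> k" "r \<noteq> k" by (auto simp: below_def)
    moreover from this obtain i where "r i < k i" by (metis le_funD le_funI nless_le order_antisym)
    ultimately show "sum r UNIV < sum k UNIV" by (intro sum_strict_mono_ex1) (auto simp: le_fun_def)
  qed (use that in \<open>simp add: below_def\<close>)
  moreover have "Q M' k + (\<Sum>r\<in>below. Q M' r) = Q M k + (\<Sum>r\<in>below. Q M r)"
  proof -
    have "hinge_max {i. k i < n i} k \<in> G0 kl \<beta> n" "hinge_max {i. k i < n i} (\<lambda>i. Suc (k i)) \<in> G0 kl \<beta> n"
      using less.prems by (auto intro!: hinge_max_in_G0 simp: grid_def)
    then have "(\<Sum>r\<in>{r\<in>grid. r \<le> k}. Q M' r) = (\<Sum>r\<in>{r\<in>grid. r \<le> k}. Q M r)"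
      unfolding Q_def using G0
      by (simp add: sum_integral_cell_weight_le[OF M less.prems] sum_integral_cell_weight_le[OF M' less.prems])
    moreover have "finite {r\<in>grid. r \<le> k}" "k \<in> {r\<in>grid. r \<le> k}" using finite_grid less.prems by auto
    ultimately show ?thesis unfolding below_def by (metis (no_types, lifting) sum.remove)
  qed
  ultimately show ?case using sum.cong[of below below "Q M'" "Q M"] by (simp add: Q_def)
qed

definition overshoot :: "'m \<Rightarrow> real \<Rightarrow> real" where
  "overshoot i t = max 0 (kappa kl \<beta> i 0 - t) + max 0 (t - kappa kl \<beta> i (n i))"

lemma overshoot_nonneg: "0 \<le> overshoot i t"
  by (simp add: overshoot_def)

lemma borel_measurable_overshoot [measurable]: "overshoot i \<in> borel_measurable borel"
  unfolding overshoot_def[abs_def] by measurable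

lemma overshoot_powr:
  assumes "0 < p"
  shows "overshoot i t powr p = max 0 (kappa kl \<beta> i 0 - t) powr p + max 0 (t - kappa kl \<beta> i (n i)) powr p"
  using kappa_mono[of 0 "n i" i] assms by (cases "t \<le> kappa kl \<beta> i 0") (auto simp: overshoot_def)

lemma abs_diff_knot_le_of_cell_weight_pos:
  assumes "r \<in> grid" "0 < cell_weight r x"
  shows "\<bar>x $ i - kappa kl \<beta> i (r i)\<bar> \<le> \<beta> + overshoot i (x $ i)"
proof -
  have "cell r x \<noteq> {}" using assms(2) by (auto simp: cell_weight_def)
  then obtain u where u: "rounding_cdf_prev r i (x $ i) < u" "u \<le> rounding_cdf i (x $ i) (r i)"
    by (auto simp: cell_def)
  have "0 < u" using u(1) rounding_cdf_prev_nonneg[of r i "x $ i"] by linarith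
  have "u \<le> 1" using u(2) rounding_cdf_bounds(2)[of i "x $ i" "r i"] by linarith
  have "r i \<le> n i" using assms(1) by (simp add: grid_def)
  have upper: "x $ i - kappa kl \<beta> i (r i) \<le> \<beta> + overshoot i (x $ i)"
  proof (cases "r i < n i")
    case True
    then show ?thesis
      using rounding_cdf_pos_imp_less[OF True, of "x $ i"] u \<open>0 < u\<close> overshoot_nonneg[of i "x $ i"]
      by linarith
  qed (use \<open>r i \<le> n i\<close> beta_pos in \<open>auto simp: overshoot_def\<close>)
  have lower: "kappa kl \<beta> i (r i) - x $ i \<le> \<beta> + overshoot i (x $ i)"
  proof (cases "r i = 0")
    case False
    then have "kappa kl \<beta> i (r i - 1) < x $ i"
      using u \<open>u \<le> 1\<close> by (intro rounding_cdf_less_1_imp_greater) (simp add: rounding_cdf_prev_def)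
    moreover have "kappa kl \<beta> i (r i) = kappa kl \<beta> i (r i - 1) + \<beta>"
      using False kappa_Suc[of i "r i - 1"] by simp
    ultimately show ?thesis using overshoot_nonneg[of i "x $ i"] by linarith
  qed (use beta_pos in \<open>auto simp: overshoot_def\<close>)
  from upper lower show ?thesis by linarith
qed

section \<open>The coupling through the grid\<close>

text \<open>The coupling sends x and y independently to the same grid point r; Q r is the
  common mass of the cell r, and inverse 0 = 0 takes care of null cells.\<close>
definition grid_density :: "(('m \<Rightarrow> nat) \<Rightarrow> real) \<Rightarrow> real^'m \<Rightarrow> real^'m \<Rightarrow> real" where
  "grid_density Q x y = (\<Sum>r\<in>grid. inverse (Q r) * cell_weight r x * cell_weight r y)"

lemma grid_density_commute: "grid_density Q x y = grid_density Q y x"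
  unfolding grid_density_def by (simp add: ac_simps)

lemma borel_measurable_grid_density:
  "(\<lambda>z. grid_density Q (fst z) (snd z)) \<in> borel_measurable (borel \<Otimes>\<^sub>M borel)"
  unfolding grid_density_def by measurable

lemma borel_measurable_grid_density_pair:
  assumes "sets M = sets borel" "sets M' = sets borel"
  shows "(\<lambda>z. ennreal (grid_density Q (fst z) (snd z))) \<in> borel_measurable (M \<Otimes>\<^sub>M M')"
  using measurable_compose[OF borel_measurable_grid_density measurable_ennreal]
  by (subst measurable_cong_sets[OF sets_pair_measure_cong[OF assms] refl]) simp

lemma grid_density_pos_imp:
  assumes "0 < grid_density Q x y"
  obtains r where "r \<in> grid" "0 < cell_weight r x" "0 < cell_weight r y"
proof -
  from assms obtain r where "r \<in> grid" "inverse (Q r) * cell_weight r x * cell_weight r y \<noteq> 0"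
    unfolding grid_density_def by (metis (no_types, lifting) less_irrefl sum.neutral)
  then show ?thesis using that cell_weight_nonneg by (simp add: less_le)
qed

lemma nn_integral_grid_density:
  assumes M: "prob_space M" "sets M = sets borel" and M': "prob_space M'" "sets M' = sets borel"
    and Q: "\<And>r. r \<in> grid \<Longrightarrow> (\<integral>x. cell_weight r x \<partial>M) = Q r"
      "\<And>r. r \<in> grid \<Longrightarrow> (\<integral>y. cell_weight r y \<partial>M') = Q r"
  shows "AE x in M. (\<integral>\<^sup>+y. ennreal (grid_density Q x y) \<partial>M') = 1"
proof -
  have int: "integrable K (cell_weight r)" if "prob_space K" "sets K = sets borel" for K r
    using integrable_cell_weight that prob_space.axioms(1) by blast
  have Q0: "0 \<le> Q r" if "r \<in> grid" for r
    using Q(1)[OF that] cell_weight_nonneg by (metis integral_nonneg_AE AE_I2)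
  have "(\<integral>\<^sup>+y. ennreal (grid_density Q x y) \<partial>M')
      = ennreal (\<Sum>r\<in>grid. inverse (Q r) * Q r * cell_weight r x)" for x
  proof -
    have "(\<integral>y. grid_density Q x y \<partial>M') = (\<Sum>r\<in>grid. inverse (Q r) * cell_weight r x * Q r)"
      unfolding grid_density_def using int[OF M'] Q(2)
      by (subst Bochner_Integration.integral_sum) auto
    moreover have "0 \<le> grid_density Q x y" for y
      unfolding grid_density_def using Q0 cell_weight_nonneg by (intro sum_nonneg) auto
    ultimately show ?thesis
      unfolding grid_density_def using int[OF M']
      by (subst nn_integral_eq_integral) (auto simp: ac_simps grid_density_def)
  qed
  moreover have "AE x in M. \<forall>r\<in>grid. Q r = 0 \<longrightarrow> cell_weight r x = 0"
  proof (rule AE_finite_allI[OF finite_grid])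
    fix r assume r: "r \<in> grid"
    show "AE x in M. Q r = 0 \<longrightarrow> cell_weight r x = 0"
    proof (cases "Q r = 0")
      case True
      then have "AE x in M. cell_weight r x = 0"
        using integral_nonneg_eq_0_iff_AE[OF int[OF M]] Q(1)[OF r] cell_weight_nonneg by auto
      then show ?thesis by eventually_elim simp
    qed simp
  qed
  then have "AE x in M. (\<Sum>r\<in>grid. inverse (Q r) * Q r * cell_weight r x) = 1"
    by eventually_elim (auto simp: sum_cell_weight intro!: trans[OF sum.cong sum_cell_weight])
  ultimately show ?thesis by simp
qed

lemma grid_density_in_couplings:
  assumes M: "prob_space M" "sets M = sets borel" and M': "prob_space M'" "sets M' = sets borel"
    and cells: "\<And>r. r \<in> grid \<Longrightarrow> (\<integral>x. cell_weight r x \<partial>M') = (\<integral>x. cell_weight r x \<partial>M)"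
  defines "Q r \<equiv> \<integral>x. cell_weight r x \<partial>M"
  shows "density (M \<Otimes>\<^sub>M M') (\<lambda>z. ennreal (grid_density Q (fst z) (snd z))) \<in> couplings M M'"
proof (rule density_pair_in_couplings[OF M M'])
  show "(\<lambda>z. ennreal (grid_density Q (fst z) (snd z))) \<in> borel_measurable (M \<Otimes>\<^sub>M M')"
    using M(2) M'(2) by (rule borel_measurable_grid_density_pair)
  show "AE x in M. (\<integral>\<^sup>+y. ennreal (grid_density Q (fst (x, y)) (snd (x, y))) \<partial>M') = 1"
    using nn_integral_grid_density[OF M M'] cells by (simp add: Q_def)
  show "AE y in M'. (\<integral>\<^sup>+x. ennreal (grid_density Q (fst (x, y)) (snd (x, y))) \<partial>M) = 1"
    using nn_integral_grid_density[OF M' M] cells by (simp add: Q_def grid_density_commute)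
qed

lemma AE_grid_density_close:
  assumes "sets M = sets borel" "sets M' = sets borel"
  shows "AE z in density (M \<Otimes>\<^sub>M M') (\<lambda>z. ennreal (grid_density Q (fst z) (snd z))).
    \<forall>i. \<bar>fst z $ i - snd z $ i\<bar> \<le> 2 * \<beta> + overshoot i (fst z $ i) + overshoot i (snd z $ i)"
  unfolding AE_density[OF borel_measurable_grid_density_pair[OF assms]]
proof (intro AE_I2 impI allI)
  fix z :: "(real^'m) \<times> (real^'m)" and i
  assume "0 < ennreal (grid_density Q (fst z) (snd z))"
  then obtain r where "r \<in> grid" "0 < cell_weight r (fst z)" "0 < cell_weight r (snd z)"
    using grid_density_pos_imp by (metis ennreal_less_zero_iff)
  then show "\<bar>fst z $ i - snd z $ i\<bar> \<le> 2 * \<beta> + overshoot i (fst z $ i) + overshoot i (snd z $ i)"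
    using abs_diff_knot_le_of_cell_weight_pos[of r "fst z" i] abs_diff_knot_le_of_cell_weight_pos[of r "snd z" i]
    by linarith
qed

lemma Wp_le_of_equal_cell_weights:
  fixes N :: "real^'m \<Rightarrow> real"
  assumes N: "is_norm N" "continuous_on UNIV N" and p: "1 \<le> p" and C: "0 \<le> C"
    and NC: "\<forall>x. N x \<le> C * lp_norm p x"
    and M: "prob_space M" "sets M = sets borel" and M': "prob_space M'" "sets M' = sets borel"
    and cells: "\<And>r. r \<in> grid \<Longrightarrow> (\<integral>x. cell_weight r x \<partial>M') = (\<integral>x. cell_weight r x \<partial>M)"
    and int: "\<And>i. integrable M (\<lambda>x. overshoot i (x $ i) powr p)"
      "\<And>i. integrable M' (\<lambda>x. overshoot i (x $ i) powr p)"
    and tails: "(\<Sum>i\<in>UNIV. \<integral>x. overshoot i (x $ i) powr p \<partial>M')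
      = (\<Sum>i\<in>UNIV. \<integral>x. overshoot i (x $ i) powr p \<partial>M)"
  shows "Wp N p M M' \<le> C * (2 * \<beta> * real CARD('m) powr (1 / p)
    + 2 * (\<Sum>i\<in>UNIV. \<integral>x. overshoot i (x $ i) powr p \<partial>M) powr (1 / p))"
proof -
  have "Wp N p M M' \<le> C * (2 * \<beta> * real CARD('m) powr (1 / p)
      + (\<Sum>i\<in>UNIV. \<integral>x. overshoot i (x $ i) powr p \<partial>M) powr (1 / p)
      + (\<Sum>i\<in>UNIV. \<integral>x. overshoot i (x $ i) powr p \<partial>M') powr (1 / p))"
    by (rule Wp_le_of_coordinatewise_coupling[OF N p C NC grid_density_in_couplings[OF M M' cells],
          where a = "2 * \<beta>" and d = "\<lambda>i x. overshoot i (x $ i)"])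
       (use AE_grid_density_close[OF M(2) M'(2)] int beta_pos overshoot_nonneg in auto)
  then show ?thesis using tails by (simp add: add.commute)
qed

section \<open>Moments fixed by G\<close>

lemma Pp_integrable_hinge_max:
  fixes N :: "real^'m \<Rightarrow> real"
  assumes "is_norm N" "continuous_on UNIV N" "1 \<le> p" "\<mu> \<in> Pp N p"
  shows "integrable \<mu> (hinge_max L j)"
  by (rule Pp_integrable_of_linear_bound[OF assms borel_measurable_hinge_max abs_hinge_max_le])

lemma Pp_integrable_overshoot_powr:
  fixes N :: "real^'m \<Rightarrow> real"
  assumes N: "is_norm N" "continuous_on UNIV N" and p: "1 \<le> p" and \<mu>: "\<mu> \<in> Pp N p"
  shows "integrable \<mu> (\<lambda>x. overshoot i (x $ i) powr p)"
proof -
  interpret prob_space \<mu> using \<mu> by (simp add: Pp_def)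
  have [measurable_cong]: "sets \<mu> = sets borel" using \<mu> by (simp add: Pp_def)
  define K where "K = \<bar>kappa kl \<beta> i 0\<bar> + \<bar>kappa kl \<beta> i (n i)\<bar>"
  have int: "integrable \<mu> (\<lambda>x. (\<bar>x $ i\<bar> + K) powr p)"
    by (rule integrable_powr_add[OF p])
       (use Pp_integrable_component_powr[OF N _ \<mu>] p in \<open>auto simp: K_def\<close>)
  have "overshoot i t \<le> \<bar>t\<bar> + K" for t
    unfolding overshoot_def K_def by (auto simp: max_def)
  then have "overshoot i t powr p \<le> (\<bar>t\<bar> + K) powr p" for t
    using overshoot_nonneg p by (intro powr_mono2) auto
  then show ?thesis
    by (intro Bochner_Integration.integrable_bound[OF int]) (auto intro!: AE_I2)
qed

lemma eq_class_Gfam_cell_weight: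
  fixes N :: "real^'m \<Rightarrow> real"
  assumes N: "is_norm N" "continuous_on UNIV N" and p: "1 \<le> p" and \<mu>: "\<mu> \<in> Pp N p"
    and \<nu>: "\<nu> \<in> eq_class N p (Gfam p kl \<beta> n) \<mu>" and "r \<in> grid"
  shows "(\<integral>x. cell_weight r x \<partial>\<nu>) = (\<integral>x. cell_weight r x \<partial>\<mu>)"
proof (rule integral_cell_weight_eq_of_G0)
  show "prob_space \<mu>" "sets \<mu> = sets borel" "prob_space \<nu>" "sets \<nu> = sets borel"
    using \<mu> \<nu> by (auto simp: eq_class_def PpG_def Pp_def)
  fix g assume "g \<in> G0 kl \<beta> n"
  moreover have "G0 kl \<beta> n \<subseteq> Gfam p kl \<beta> n" by (auto simp: Gfam_def)
  ultimately have "g \<in> Gfam p kl \<beta> n" by blast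
  moreover obtain L j where "g = hinge_max L j" using G0_hinge_max[OF \<open>g \<in> G0 kl \<beta> n\<close>] by blast
  ultimately show "integrable \<mu> g \<and> integrable \<nu> g \<and> (\<integral>x. g x \<partial>\<nu>) = (\<integral>x. g x \<partial>\<mu>)"
    using Pp_integrable_hinge_max[OF N p \<mu>] eq_class_integrable_eq[OF \<nu> _ p] by simp
qed fact

lemma overshoot_eq_hinge_max:
  "overshoot i (x $ i) = hinge_max {i} (\<lambda>_. 0) x - x $ i + kappa kl \<beta> i 0 + hinge_max {i} n x"
proof -
  have "hinge_max {i} j x = max 0 (x $ i - kappa kl \<beta> i (j i))" for j
    by (simp add: hinge_max_def)
  then show ?thesis by (simp add: overshoot_def max_def)
qed

lemma Pp_integrable_overshoot_parts:
  fixes N :: "real^'m \<Rightarrow> real"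
  assumes N: "is_norm N" "continuous_on UNIV N" and p: "1 \<le> p" and \<mu>: "\<mu> \<in> Pp N p"
  shows "integrable \<mu> (\<lambda>x. max 0 (kappa kl \<beta> i 0 - x $ i) powr p)"
    and "integrable \<mu> (\<lambda>x. max 0 (x $ i - kappa kl \<beta> i (n i)) powr p)"
proof -
  have [measurable_cong]: "sets \<mu> = sets borel" using \<mu> by (simp add: Pp_def)
  have "0 < p" using p by simp
  note overshoot = Pp_integrable_overshoot_powr[OF N p \<mu>, of i, unfolded overshoot_powr[OF this]]
  show "integrable \<mu> (\<lambda>x. max 0 (kappa kl \<beta> i 0 - x $ i) powr p)"
    by (rule Bochner_Integration.integrable_bound[OF overshoot]) (auto intro!: AE_I2)
  show "integrable \<mu> (\<lambda>x. max 0 (x $ i - kappa kl \<beta> i (n i)) powr p)"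
    by (rule Bochner_Integration.integrable_bound[OF overshoot]) (auto intro!: AE_I2)
qed

text \<open>For p = 1 the overshoot is an affine combination of two functions of G0 and a
  coordinate; for p > 1 its p-th power is the sum of the two extra functions of G.\<close>
lemma eq_class_Gfam_overshoot:
  fixes N :: "real^'m \<Rightarrow> real"
  assumes N: "is_norm N" "continuous_on UNIV N" and p: "1 \<le> p" and \<mu>: "\<mu> \<in> Pp N p"
    and \<nu>: "\<nu> \<in> eq_class N p (Gfam p kl \<beta> n) \<mu>"
  shows "integrable \<nu> (\<lambda>x. overshoot i (x $ i) powr p)
    \<and> (\<integral>x. overshoot i (x $ i) powr p \<partial>\<nu>) = (\<integral>x. overshoot i (x $ i) powr p \<partial>\<mu>)"
proof -
  interpret \<mu>: prob_space \<mu> using \<mu> by (simp add: Pp_def)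
  interpret \<nu>: prob_space \<nu> using \<nu> by (simp add: eq_class_def PpG_def Pp_def)
  have G: "integrable \<nu> g" "(\<integral>x. g x \<partial>\<nu>) = (\<integral>x. g x \<partial>\<mu>)" if "g \<in> Gfam p kl \<beta> n" for g
    using eq_class_integrable_eq[OF \<nu> that p] by auto
  show ?thesis
  proof (cases "p = 1")
    case True
    have g: "hinge_max {i} (\<lambda>_. 0) \<in> Gfam p kl \<beta> n" "hinge_max {i} n \<in> Gfam p kl \<beta> n"
        "(\<lambda>x. x $ i) \<in> Gfam p kl \<beta> n"
      using True hinge_max_in_G0 by (auto simp: Gfam_def)
    have "overshoot i (x $ i) powr p = overshoot i (x $ i)" for x
      using True overshoot_nonneg by simp
    then show ?thesis
      using G[OF g(1)] G[OF g(2)] G[OF g(3)] Pp_integrable_hinge_max[OF N p \<mu>]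
        Pp_integrable_component[OF N p \<mu>]
      by (simp add: overshoot_eq_hinge_max \<mu>.prob_space \<nu>.prob_space)
  next
    case False
    have g: "(\<lambda>x. max 0 (kappa kl \<beta> i 0 - x $ i) powr p) \<in> Gfam p kl \<beta> n"
        "(\<lambda>x. max 0 (x $ i - kappa kl \<beta> i (n i)) powr p) \<in> Gfam p kl \<beta> n"
      using False by (auto simp: Gfam_def)
    show ?thesis
      using G[OF g(1)] G[OF g(2)] Pp_integrable_overshoot_parts[OF N p \<mu>, of i] p
      by (simp add: overshoot_powr)
  qed
qed

lemma Wbar_Gfam_le_overshoot:
  fixes N :: "real^'m \<Rightarrow> real"
  assumes N: "is_norm N" and p: "1 \<le> p" and \<mu>: "\<mu> \<in> Pp N p" and C: "0 \<le> C"
    and NC: "\<forall>x. N x \<le> C * lp_norm p x"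
  shows "Wbar N p (Gfam p kl \<beta> n) \<mu> \<le> ennreal (2 * C * real CARD('m) powr (1 / p) * \<beta>
    + 2 * C * (\<Sum>i\<in>UNIV. \<integral>x. overshoot i (x $ i) powr p \<partial>\<mu>) powr (1 / p))"
  unfolding Wbar_def
proof (intro SUP_least ennreal_leI)
  fix \<nu> assume \<nu>: "\<nu> \<in> eq_class N p (Gfam p kl \<beta> n) \<mu>"
  have cont: "continuous_on UNIV N" using is_norm_continuous_of_lp_bound[OF N _ NC] p by simp
  have "Wp N p \<mu> \<nu> \<le> C * (2 * \<beta> * real CARD('m) powr (1 / p)
      + 2 * (\<Sum>i\<in>UNIV. \<integral>x. overshoot i (x $ i) powr p \<partial>\<mu>) powr (1 / p))"
  proof (rule Wp_le_of_equal_cell_weights[OF N cont p C NC])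
    show "prob_space \<mu>" "sets \<mu> = sets borel" "prob_space \<nu>" "sets \<nu> = sets borel"
      using \<mu> \<nu> by (auto simp: eq_class_def PpG_def Pp_def)
  qed (use eq_class_Gfam_cell_weight[OF N cont p \<mu> \<nu>] eq_class_Gfam_overshoot[OF N cont p \<mu> \<nu>]
         Pp_integrable_overshoot_powr[OF N cont p \<mu>] in auto)
  then show "Wp N p \<mu> \<nu> \<le> 2 * C * real CARD('m) powr (1 / p) * \<beta>
      + 2 * C * (\<Sum>i\<in>UNIV. \<integral>x. overshoot i (x $ i) powr p \<partial>\<mu>) powr (1 / p)"
    by (simp add: algebra_simps)
qed

lemma integral_distr_component_overshoot:
  assumes "sets \<mu> = sets borel" "0 < p"
  shows "(\<integral>t. max 0 (kappa kl \<beta> i 0 - t) powr p + max 0 (t - kappa kl \<beta> i (n i)) powr p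
      \<partial>distr \<mu> borel (\<lambda>x. x $ i)) = (\<integral>x. overshoot i (x $ i) powr p \<partial>\<mu>)"
  using assms measurable_cong_sets[OF assms(1) refl]
  by (subst integral_distr) (auto simp: overshoot_powr)

lemma sum_integral_overshoot_le_tail_moment:
  assumes "\<And>i. kappa kl \<beta> i 0 \<le> - K" "\<And>i. K \<le> kappa kl \<beta> i (n i)" "0 < p"
    and "\<And>i. integrable \<mu> (\<lambda>x. overshoot i (x $ i) powr p)"
    and "\<And>i. integrable \<mu> (\<lambda>x. max 0 (- K - x $ i) powr p + max 0 (x $ i - K) powr p)"
  shows "(\<Sum>i\<in>UNIV. \<integral>x. overshoot i (x $ i) powr p \<partial>\<mu>) \<le> tail_moment p \<mu> K"
  unfolding tail_moment_def
proof (intro sum_mono integral_mono)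
  fix i x
  have "max 0 (kappa kl \<beta> i 0 - x $ i) \<le> max 0 (- K - x $ i)"
    "max 0 (x $ i - kappa kl \<beta> i (n i)) \<le> max 0 (x $ i - K)"
    using assms(1,2)[of i] by auto
  then show "overshoot i (x $ i) powr p \<le> max 0 (- K - x $ i) powr p + max 0 (x $ i - K) powr p"
    using assms(3) unfolding overshoot_powr[OF assms(3)] by (intro add_mono powr_mono2) auto
qed (use assms(4,5) in auto)

end

lemma Wbar_Gfam_le:
  fixes N :: "real^'m \<Rightarrow> real" and \<mu> :: "(real^'m) measure"
  assumes "is_norm N" "1 \<le> p" "\<mu> \<in> Pp N p" "0 \<le> C" "\<forall>x. N x \<le> C * lp_norm p x" "0 < \<beta>"
  shows "Wbar N p (Gfam p kl \<beta> n) \<mu>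
    \<le> ennreal (2 * C * real CARD('m) powr (1 / p) * \<beta>
      + 2 * C * (\<Sum>i\<in>UNIV. \<integral>t. (max 0 (kappa kl \<beta> i 0 - t)) powr p
            + (max 0 (t - kappa kl \<beta> i (n i))) powr p \<partial>(distr \<mu> borel (\<lambda>x. x $ i))) powr (1 / p))"
proof -
  interpret knot_grid kl \<beta> n using \<open>0 < \<beta>\<close> by unfold_locales
  have "sets \<mu> = sets borel" using \<open>\<mu> \<in> Pp N p\<close> by (simp add: Pp_def)
  then show ?thesis
    using Wbar_Gfam_le_overshoot[OF assms(1-5)] integral_distr_component_overshoot \<open>1 \<le> p\<close> by simp
qed

lemma Wbar_Gfam_arbitrarily_small:
  fixes N :: "real^'m \<Rightarrow> real" and \<mu> :: "(real^'m) measure"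
  assumes N: "is_norm N" and p: "1 \<le> p" and \<mu>: "\<mu> \<in> Pp N p" and C: "0 < C"
    and NC: "\<forall>x. N x \<le> C * lp_norm p x" and "0 < \<epsilon>"
  shows "\<exists>\<beta>>0. \<exists>(n :: 'm \<Rightarrow> nat) (kl :: 'm \<Rightarrow> real). Wbar N p (Gfam p kl \<beta> n) \<mu> \<le> ennreal \<epsilon>"
proof -
  have p0: "0 < p" using p by simp
  have cont: "continuous_on UNIV N" using is_norm_continuous_of_lp_bound[OF N p0 NC] .
  obtain K :: nat where K: "tail_moment p \<mu> (real K) powr (1 / p) < \<epsilon> / (4 * C)"
    using exists_tail_moment_powr_less[OF N cont p0 \<mu>, of "\<epsilon> / (4 * C)"] \<open>0 < \<epsilon>\<close> C by auto
  define m where "m = real CARD('m) powr (1 / p)"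
  define \<beta> where "\<beta> = \<epsilon> / (4 * C * m)"
  have "0 < m" "0 < \<beta>" using \<open>0 < \<epsilon>\<close> C by (auto simp: m_def \<beta>_def)
  define kl :: "'m \<Rightarrow> real" where "kl i = - real K" for i
  define n :: "'m \<Rightarrow> nat" where "n i = nat \<lceil>2 * real K / \<beta>\<rceil>" for i
  interpret knot_grid kl \<beta> n using \<open>0 < \<beta>\<close> by unfold_locales
  have kn: "real K \<le> kappa kl \<beta> i (n i)" for i
  proof -
    have "2 * real K / \<beta> \<le> real (n i)" unfolding n_def by linarith
    then show ?thesis using \<open>0 < \<beta>\<close> by (simp add: kappa_def kl_def field_simps)
  qed
  define T where "T = (\<Sum>i\<in>UNIV. \<integral>x. overshoot i (x $ i) powr p \<partial>\<mu>)"
  have "0 \<le> T" unfolding T_def by (auto intro!: sum_nonneg integral_nonneg_AE)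
  moreover have "T \<le> tail_moment p \<mu> (real K)"
    unfolding T_def
    using Pp_integrable_overshoot_powr[OF N cont p \<mu>] Pp_integrable_tail[OF N cont p0 \<mu>] p0 kn
    by (intro sum_integral_overshoot_le_tail_moment) (auto simp: kappa_def kl_def)
  ultimately have "T powr (1 / p) \<le> tail_moment p \<mu> (real K) powr (1 / p)"
    using p0 by (intro powr_mono2) auto
  with K have "T powr (1 / p) < \<epsilon> / (4 * C)" by linarith
  then have "2 * C * T powr (1 / p) < 2 * C * (\<epsilon> / (4 * C))"
    using C by (intro mult_strict_left_mono) auto
  moreover have "2 * C * (\<epsilon> / (4 * C)) = \<epsilon> / 2" "2 * C * m * \<beta> = \<epsilon> / 2"
    using C \<open>0 < m\<close> by (simp_all add: \<beta>_def field_simps)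
  ultimately have "2 * C * m * \<beta> + 2 * C * T powr (1 / p) \<le> \<epsilon>" by linarith
  then have "Wbar N p (Gfam p kl \<beta> n) \<mu> \<le> ennreal \<epsilon>"
    using Wbar_Gfam_le_overshoot[OF N p \<mu> less_imp_le[OF C] NC]
    unfolding m_def T_def by (meson ennreal_leI order_trans)
  then show ?thesis using \<open>0 < \<beta>\<close> by blast
qed

theorem corollary3p15:
  fixes N :: "real^'m \<Rightarrow> real" and p C :: real and \<mu> :: "(real^'m) measure"
  assumes "is_norm N" and "1 \<le> p" and "\<mu> \<in> Pp N p" and "1 \<le> C"
    and "\<forall>x. N x \<le> C * (\<Sum>i\<in>UNIV. \<bar>x $ i\<bar> powr p) powr (1 / p)"
  shows "(\<forall>\<beta>>0. \<forall>(n :: 'm \<Rightarrow> nat) (kl :: 'm \<Rightarrow> real).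
           Wbar N p (Gfam p kl \<beta> n) \<mu>
             \<le> ennreal (2 * C * real CARD('m) powr (1 / p) * \<beta>
               + 2 * C * (\<Sum>i\<in>UNIV. \<integral>t. (max 0 (kappa kl \<beta> i 0 - t)) powr p
                     + (max 0 (t - kappa kl \<beta> i (n i))) powr p
                   \<partial>(distr \<mu> borel (\<lambda>x. x $ i))) powr (1 / p)))
       \<and> (\<forall>\<epsilon>>0. \<exists>\<beta>>0. \<exists>(n :: 'm \<Rightarrow> nat) (kl :: 'm \<Rightarrow> real).
           Wbar N p (Gfam p kl \<beta> n) \<mu> \<le> ennreal \<epsilon>)"
proof -
  have "0 \<le> C" "0 < C" using \<open>1 \<le> C\<close> by auto
  then show ?thesis
    using Wbar_Gfam_le[OF assms(1-3) _ assms(5)] Wbar_Gfam_arbitrarily_small[OF assms(1-3) _ assms(5)]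
    by blast
qed

end
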